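(* There exists a deterministic algorithm $A$ such that for every positive integer $k$, every graph $G$ on $n$ nodes (of maximum degree at most $\Delta$) and every colored tree labeling of $G$, $A$ (given $k$) solves $\textsf{Hierarchical-THC}(k)$ on this input, and every execution of $A$ has distance cost $O(k\, n^{1/k})$ (with an absolute constant in the $O$).
   Context: Computational model. Fix a constant $\Delta\ge3$. An input is a graph $G=(V,E)$ on $n$ nodes with maximum degree at most $\Delta$, where each node has a unique identifier in $\{1,\dots,n^\alpha\}$ (some fixed $\alpha\ge1$), a port numbering, and an input label; $n$ is known to every node. An algorithm executed from a node $v$ maintains a set $V_v$ of visited nodes, initially $\{v\}$; in each step it queries $(w,j)$ with $w\in V_v$, $j\in\{1,\dots,\deg(w)\}$, and receives the identifier, degree and entire input of the neighbor $u$ of $w$ at port $j$, which is added to $V_v$; eventually it outputs the output label of $v$. Its distance cost is $\max_{w\in V_v}\mathrm{dist}(v,w)$. A deterministic algorithm solves a problem if the outputs from all nodes always form a valid output. Colored tree labelings. A colored tree labeling assigns to each node $v$ a parent $\mathrm{P}(v)$, a left child $\mathrm{LC}(v)$ and a right child $\mathrm{RC}(v)$, each in $\{1,\dots,\Delta\}\cup\{\bot\}$ (a non-$\bot$ value is a port number of $v$ identified with the neighbor reached through it; the non-$\bot$ values at $v$ are pairwise distinct), and a color $\chi_{\mathrm{in}}(v)\in\{R,B\}$. Hierarchical forest. Define $\mathrm{level}(v)=1$ if $\mathrm{RC}(v)=\bot$ and $\mathrm{level}(v)=1+\mathrm{level}(\mathrm{RC}(v))$ otherwise. For $k\ge1$,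 the hierarchical forest $G_k$ contains the edge $\{u,v\}$ iff $\mathrm{level}(u),\mathrm{level}(v)\le k$, $v=\mathrm{P}(u)$, and either ($u=\mathrm{LC}(v)$ and $\mathrm{level}(v)=\mathrm{level}(u)$) or ($u=\mathrm{RC}(v)$ and $\mathrm{level}(v)=\mathrm{level}(u)+1$). In the conditions below, a label $\mathrm{P}(v),\mathrm{LC}(v),\mathrm{RC}(v)$ whose corresponding edge is not in $G_k$ is treated as $\bot$. A node $v$ of level $\ell$ is a level-$\ell$ root if $\mathrm{P}(v)=\bot$ or $v=\mathrm{RC}(\mathrm{P}(v))$, and a level-$\ell$ leaf if $\mathrm{LC}(v)=\bot$. The problem $\textsf{Hierarchical-THC}(k)$: the input is a colored tree labeling; each node outputs $\chi_{\mathrm{out}}(v)\in\{R,B,D,X\}$; the output is valid iff for every node $v$, with $\ell=\mathrm{level}(v)$: (1) if $\ell>k$ then $\chi_{\mathrm{out}}(v)=X$; (2) if $v$ is a level-$\ell$ leaf then $\chi_{\mathrm{out}}(v)\in\{\chi_{\mathrm{in}}(v),D,X\}$; (3) if $\ell=1$ then (a) $\chi_{\mathrm{out}}(v)\in\{R,B,D\}$ and (b) if $v$ is not a level-1 leaf then $\chi_{\mathrm{out}}(v)=\chi_{\mathrm{out}}(\mathrm{LC}(v))$; (4) if $1<\ell<k$ and $v$ is not a level-$\ell$ leaf then either (a) $\chi_{\mathrm{out}}(v)=\chi_{\mathrm{out}}(\mathrm{LC}(v))\in\{R,B,D\}$, or (b) $\chi_{\mathrm{out}}(v)=X$ and $\chi_{\mathrm{out}}(\mathrm{RC}(v))\in\{R,B,X\}$,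 or (c) $\chi_{\mathrm{out}}(v)\in\{\chi_{\mathrm{in}}(v),D\}$ and $\chi_{\mathrm{out}}(\mathrm{LC}(v))=X$; (5) if $\ell=k$ then $\chi_{\mathrm{out}}(v)\in\{R,B,X\}$ and (a) if $\chi_{\mathrm{out}}(v)=X$ then $\chi_{\mathrm{out}}(\mathrm{RC}(v))\in\{R,B,X\}$, and (b) if $v$ is not a level-$\ell$ leaf and $\chi_{\mathrm{out}}(v)\ne X$ then either $\chi_{\mathrm{out}}(\mathrm{LC}(v))\ne X$ and $\chi_{\mathrm{out}}(v)=\chi_{\mathrm{out}}(\mathrm{LC}(v))$, or $\chi_{\mathrm{out}}(\mathrm{LC}(v))=X$ and $\chi_{\mathrm{out}}(v)=\chi_{\mathrm{in}}(v)$. *)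

theory Defs
  imports Complex_Main
begin

text \<open>A single colour type; input colours are required to lie in {R,B}.
  \<open>None\<close> plays the role of \<open>\<bottom>\<close>.\<close>
datatype color = R | B | D | X

record label =
  par :: "nat option"   \<comment> \<open>P(v): a port number of v, or None\<close>
  lc  :: "nat option"
  rc  :: "nat option"
  cin :: color

text \<open>An input: the nodes are (hidden) names 0..<n; deg, port numbering,
  identifiers and input labels.\<close>
record inst =
  deg   :: "nat \<Rightarrow> nat"
  port  :: "nat \<Rightarrow> nat \<Rightarrow> nat"
  ident :: "nat \<Rightarrow> nat"
  lab   :: "nat \<Rightarrow> label"

definition adj :: "inst \<Rightarrow> nat \<Rightarrow> nat \<Rightarrow> bool" where
  "adj I u w \<longleftrightarrow> (\<exists>j. 1 \<le> j \<and> j \<le> deg I u \<and> port I u j = w)"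

definition valid_graph :: "nat \<Rightarrow> real \<Rightarrow> nat \<Rightarrow> inst \<Rightarrow> bool" where
  "valid_graph \<Delta> \<alpha> n I \<longleftrightarrow>
     (\<forall>v<n. deg I v \<le> \<Delta>) \<and>
     (\<forall>v<n. \<forall>j. 1 \<le> j \<and> j \<le> deg I v \<longrightarrow> port I v j < n \<and> port I v j \<noteq> v) \<and>
     (\<forall>v<n. inj_on (port I v) {1..deg I v}) \<and>
     (\<forall>v<n. \<forall>w. adj I v w \<longrightarrow> adj I w v) \<and>
     inj_on (ident I) {0..<n} \<and>
     (\<forall>v<n. 1 \<le> ident I v \<and> real (ident I v) \<le> real n powr \<alpha>)"

definition valid_port_label :: "nat \<Rightarrow> inst \<Rightarrow> nat \<Rightarrow> nat option \<Rightarrow> bool" where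
  "valid_port_label \<Delta> I v p \<longleftrightarrow> (\<forall>j. p = Some j \<longrightarrow> 1 \<le> j \<and> j \<le> \<Delta> \<and> j \<le> deg I v)"

definition colored_tree_labeling :: "nat \<Rightarrow> nat \<Rightarrow> inst \<Rightarrow> bool" where
  "colored_tree_labeling \<Delta> n I \<longleftrightarrow>
     (\<forall>v<n. valid_port_label \<Delta> I v (par (lab I v)) \<and>
            valid_port_label \<Delta> I v (lc (lab I v)) \<and>
            valid_port_label \<Delta> I v (rc (lab I v)) \<and>
            (par (lab I v) \<noteq> None \<longrightarrow> par (lab I v) \<noteq> lc (lab I v)) \<and>
            (par (lab I v) \<noteq> None \<longrightarrow> par (lab I v) \<noteq> rc (lab I v)) \<and>
            (lc (lab I v) \<noteq> None \<longrightarrow> lc (lab I v) \<noteq> rc (lab I v)) \<and>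
            cin (lab I v) \<in> {R, B})"

definition nbr :: "inst \<Rightarrow> nat \<Rightarrow> nat option \<Rightarrow> nat option" where
  "nbr I v p = map_option (port I v) p"

inductive has_level :: "inst \<Rightarrow> nat \<Rightarrow> nat \<Rightarrow> bool" for I where
  base: "rc (lab I v) = None \<Longrightarrow> has_level I v 1"
| step: "rc (lab I v) = Some j \<Longrightarrow> has_level I (port I v j) l \<Longrightarrow> has_level I v (Suc l)"

text \<open>level(v); None means the RC-chain never reaches \<bottom> (level is infinite).\<close>
definition level :: "inst \<Rightarrow> nat \<Rightarrow> nat option" where
  "level I v = (if \<exists>l. has_level I v l then Some (THE l. has_level I v l) else None)"

definition gk_child :: "inst \<Rightarrow> nat \<Rightarrow> nat \<Rightarrow> nat \<Rightarrow> bool" where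
  "gk_child I k u v \<longleftrightarrow>
     (\<exists>lu lv. level I u = Some lu \<and> level I v = Some lv \<and> lu \<le> k \<and> lv \<le> k \<and>
        nbr I u (par (lab I u)) = Some v \<and>
        ((nbr I v (lc (lab I v)) = Some u \<and> lv = lu) \<or>
         (nbr I v (rc (lab I v)) = Some u \<and> lv = lu + 1)))"

definition gk_edge :: "inst \<Rightarrow> nat \<Rightarrow> nat \<Rightarrow> nat \<Rightarrow> bool" where
  "gk_edge I k u v \<longleftrightarrow> gk_child I k u v \<or> gk_child I k v u"

definition eff :: "inst \<Rightarrow> nat \<Rightarrow> nat \<Rightarrow> nat option \<Rightarrow> nat option" where
  "eff I k v p = (case nbr I v p of None \<Rightarrow> None
                   | Some w \<Rightarrow> (if gk_edge I k v w then Some w else None))"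

definition LCk :: "inst \<Rightarrow> nat \<Rightarrow> nat \<Rightarrow> nat option" where
  "LCk I k v = eff I k v (lc (lab I v))"

definition RCk :: "inst \<Rightarrow> nat \<Rightarrow> nat \<Rightarrow> nat option" where
  "RCk I k v = eff I k v (rc (lab I v))"

definition is_leaf :: "inst \<Rightarrow> nat \<Rightarrow> nat \<Rightarrow> bool" where
  "is_leaf I k v \<longleftrightarrow> LCk I k v = None"

definition rc_out_in :: "inst \<Rightarrow> nat \<Rightarrow> (nat \<Rightarrow> color) \<Rightarrow> nat \<Rightarrow> color set \<Rightarrow> bool" where
  "rc_out_in I k out v S \<longleftrightarrow> (\<forall>w. RCk I k v = Some w \<longrightarrow> out w \<in> S)"

definition hthc_valid :: "nat \<Rightarrow> nat \<Rightarrow> inst \<Rightarrow> (nat \<Rightarrow> color) \<Rightarrow> bool" where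
  "hthc_valid k n I out \<longleftrightarrow> (\<forall>v<n.
     let lcv = the (LCk I k v); leaf = is_leaf I k v; ci = cin (lab I v) in
     ((\<forall>l. level I v = Some l \<longrightarrow> l \<le> k) \<or> out v = X) \<and>
     (leaf \<longrightarrow> out v \<in> {ci, D, X}) \<and>
     (\<forall>l. level I v = Some l \<longrightarrow>
        (l = 1 \<longrightarrow> out v \<in> {R, B, D} \<and> (\<not> leaf \<longrightarrow> out v = out lcv)) \<and>
        (1 < l \<and> l < k \<and> \<not> leaf \<longrightarrow>
           (out v = out lcv \<and> out lcv \<in> {R, B, D}) \<or>
           (out v = X \<and> rc_out_in I k out v {R, B, X}) \<or>
           (out v \<in> {ci, D} \<and> out lcv = X)) \<and>
        (l = k \<longrightarrow> out v \<in> {R, B, X} \<and>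
           (out v = X \<longrightarrow> rc_out_in I k out v {R, B, X}) \<and>
           (\<not> leaf \<and> out v \<noteq> X \<longrightarrow>
              (out lcv \<noteq> X \<and> out v = out lcv) \<or> (out lcv = X \<and> out v = ci)))))"

datatype action = Query nat nat | Output color

definition obs :: "inst \<Rightarrow> nat \<Rightarrow> nat \<times> nat \<times> label" where
  "obs I w = (ident I w, deg I w, lab I w)"

text \<open>A deterministic algorithm, given k and n, maps the sequence of observations of the
  nodes discovered so far (in discovery order, the start node first) to its next action;
  a query (i, j) asks for the neighbour at port j of the i-th discovered node.\<close>
type_synonym algorithm = "nat \<Rightarrow> nat \<Rightarrow> (nat \<times> nat \<times> label) list \<Rightarrow> action"

primrec exec :: "((nat \<times> nat \<times> label) list \<Rightarrow> action) \<Rightarrow> inst \<Rightarrow> nat list \<Rightarrow> nat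
                   \<Rightarrow> (color \<times> nat list) option" where
  "exec A I vs 0 = None"
| "exec A I vs (Suc f) =
     (case A (map (obs I) vs) of
        Output c \<Rightarrow> Some (c, vs)
      | Query i j \<Rightarrow>
          (if i < length vs \<and> 1 \<le> j \<and> j \<le> deg I (vs ! i)
           then exec A I (vs @ [port I (vs ! i) j]) f else None))"

definition dist :: "inst \<Rightarrow> nat \<Rightarrow> nat \<Rightarrow> nat" where
  "dist I v w = (LEAST d. ((adj I) ^^ d) v w)"

end

theory Submission imports Defs begin

text \<open>Let \<open>t = \<lfloor>n powr (1 / k)\<rfloor>\<close>, so that \<open>n < (t + 1) ^ k\<close>.  A node of level \<open>l \<ge> 2\<close> whose right
  child did not output \<open>D\<close> is good and outputs \<open>X\<close>; the other nodes of level at most \<open>k\<close> are bad.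
  On the chains of bad nodes of one level (linked by left-child edges), a chain of at most \<open>t\<close>
  nodes copies the input colour of its bottom node, a cycle of length at most \<open>t\<close> is coloured
  \<open>R\<close>, and a longer chain outputs \<open>D\<close>.  So a bad node of level \<open>l + 2\<close> has as right child the
  top of a chain of more than \<open>t\<close> bad nodes of level \<open>l + 1\<close>; since these tops are distinct,
  \<open>m\<close> bad nodes of level \<open>l + 1\<close> account for \<open>m (t + 1) ^ l\<close> distinct nodes.  On level \<open>k\<close> a
  chain of more than \<open>t\<close> bad nodes would thus need \<open>(t + 1) ^ k > n\<close> nodes, hence no node of
  level \<open>k\<close> outputs \<open>D\<close>.  The output of a node depends only on its ball of radius \<open>O(k t)\<close>,
  which the algorithm gathers by enumerating port sequences.\<close>

section \<open>Walks along partial step functions\<close>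

primrec walk :: "(nat \<Rightarrow> nat option) \<Rightarrow> nat \<Rightarrow> nat \<Rightarrow> nat option" where
  "walk s 0 x = Some x"
| "walk s (Suc m) x = (case s x of None \<Rightarrow> None | Some y \<Rightarrow> walk s m y)"

primrec walk_end :: "(nat \<Rightarrow> nat option) \<Rightarrow> nat \<Rightarrow> nat \<Rightarrow> nat option" where
  "walk_end s 0 y = (case s y of None \<Rightarrow> Some y | Some _ \<Rightarrow> None)"
| "walk_end s (Suc f) y = (case s y of None \<Rightarrow> Some y | Some u \<Rightarrow> walk_end s f u)"

lemma walk_add: "walk s (a + b) x = Option.bind (walk s a x) (walk s b)"
  by (induction a arbitrary: x) (auto split: option.splits)

lemma walk_Suc_right: "walk s (Suc m) x = Option.bind (walk s m x) s"
proof -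
  have "walk s (Suc 0) = s" by (rule ext) (simp split: option.split)
  then show ?thesis using walk_add[of s m "Suc 0" x] by (simp only: add_Suc_right add_0_right)
qed

lemma walk_SucE:
  assumes "walk s (Suc m) x = Some z"
  obtains y where "walk s m x = Some y" "s y = Some z"
  using assms unfolding walk_Suc_right by (cases "walk s m x") auto

lemma walk_None_mono: "walk s m x = None \<Longrightarrow> m \<le> m' \<Longrightarrow> walk s m' x = None"
  using walk_add[of s m "m' - m" x] by simp

lemma walk_defined_below: "walk s m x \<noteq> None \<Longrightarrow> i \<le> m \<Longrightarrow> walk s i x \<noteq> None"
  by (meson walk_None_mono)

lemma walk_end_SomeE:
  assumes "walk_end s f y = Some T"
  obtains i where "i \<le> f" "walk s i y = Some T" "s T = None"
proof -
  have "\<exists>i\<le>f. walk s i y = Some T \<and> s T = None"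
    using assms
  proof (induction f arbitrary: y)
    case 0 then show ?case by (auto split: option.splits)
  next
    case (Suc f)
    then show ?case
    proof (cases "s y")
      case (Some u)
      then have "walk_end s f u = Some T" using Suc.prems by simp
      then obtain i where "i \<le> f" "walk s i u = Some T" "s T = None" using Suc.IH by blast
      then show ?thesis using Some by (intro exI[of _ "Suc i"]) auto
    qed (use Suc.prems in auto)
  qed
  then show thesis using that by blast
qed

lemma walk_end_None: "walk_end s f y = None \<Longrightarrow> walk s (Suc f) y \<noteq> None"
proof (induction f arbitrary: y)
  case 0 then show ?case by (auto split: option.splits)
next
  case (Suc f)
  then obtain u where "s y = Some u" "walk_end s f u = None" by (auto split: option.splits)
  then show ?case using Suc.IH by (subst walk.simps) simp
qed

lemma walk_end_Suc: "walk_end s f y = Some T \<Longrightarrow> walk_end s (Suc f) y = Some T"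
proof (induction f arbitrary: y)
  case 0 then show ?case by (auto split: option.splits)
next
  case (Suc f)
  show ?case
  proof (cases "s y")
    case (Some u)
    then have "walk_end s (Suc f) u = Some T" using Suc by simp
    then show ?thesis using Some by (simp del: walk_end.simps(2) add: walk_end.simps(2)[of s "Suc f" y])
  qed (use Suc.prems in simp)
qed

lemma walk_end_self: "s y = None \<Longrightarrow> walk_end s f y = Some y"
  by (cases f) auto

lemma walk_past_end: "walk s i x = Some y \<Longrightarrow> s y = None \<Longrightarrow> i < j \<Longrightarrow> walk s j x = None"
  using walk_add[of s i "Suc (j - i - 1)" x] by (simp del: walk.simps add: walk.simps(2)[of s _ y])

lemma walk_end_unique: "walk s i x = Some y \<Longrightarrow> s y = None \<Longrightarrow> walk s j x = Some z \<Longrightarrow> s z = None \<Longrightarrow> i = j \<and> y = z"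
  using walk_past_end by (metis linorder_neqE_nat option.distinct(1) option.inject)

lemma walk_closed:
  assumes "\<And>a c. P a \<Longrightarrow> s a = Some c \<Longrightarrow> P c" and "P x" and "walk s i x = Some y"
  shows "P y"
  using assms(2,3) by (induction i arbitrary: x) (auto split: option.splits intro: assms(1))

lemma walk_reverse:
  assumes "\<And>a c. P a \<Longrightarrow> s a = Some c \<Longrightarrow> P c \<and> s' c = Some a"
  shows "P x \<Longrightarrow> walk s i x = Some y \<Longrightarrow> walk s' i y = Some x \<and> P y"
proof (induction i arbitrary: x y)
  case 0 then show ?case by simp
next
  case (Suc i)
  then obtain c where c: "s x = Some c" "walk s i c = Some y" by (auto split: option.splits)
  have c': "P c \<and> s' c = Some x" using assms Suc.prems c by blast
  then have "walk s' i y = Some c \<and> P y" using Suc.IH c by blast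
  then show ?case using c' unfolding walk_Suc_right by simp
qed

lemma walk_cancel:
  assumes inj: "\<And>a b c. P a \<Longrightarrow> P b \<Longrightarrow> s a = Some c \<Longrightarrow> s b = Some c \<Longrightarrow> a = b"
    and cl: "\<And>a c. P a \<Longrightarrow> s a = Some c \<Longrightarrow> P c"
  shows "P x \<Longrightarrow> walk s i x = Some z \<Longrightarrow> walk s j x = Some z \<Longrightarrow> i \<le> j \<Longrightarrow> walk s (j - i) x = Some x"
proof (induction i arbitrary: j z)
  case 0 then show ?case by simp
next
  case (Suc i)
  then obtain j' where j: "j = Suc j'" by (cases j) auto
  obtain a where a: "walk s i x = Some a" "s a = Some z" using Suc.prems(2) by (rule walk_SucE)
  obtain b where b: "walk s j' x = Some b" "s b = Some z" using Suc.prems(3) unfolding j by (rule walk_SucE)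
  have "P a" by (rule walk_closed[where P=P and s=s]) (use cl Suc.prems(1) a(1) in auto)
  moreover have "P b" by (rule walk_closed[where P=P and s=s]) (use cl Suc.prems(1) b(1) in auto)
  ultimately have "a = b" using inj a(2) b(2) by blast
  then have "walk s (j' - i) x = Some x" using Suc.IH Suc.prems(1,4) a(1) b(1) j by auto
  then show ?case using j by simp
qed

lemma inj_on_walk:
  assumes inj: "\<And>a b c. P a \<Longrightarrow> P b \<Longrightarrow> s a = Some c \<Longrightarrow> s b = Some c \<Longrightarrow> a = b"
    and cl: "\<And>a c. P a \<Longrightarrow> s a = Some c \<Longrightarrow> P c"
    and "P x" and defined: "walk s t x \<noteq> None" and acyclic: "\<And>m. m \<in> {1..t} \<Longrightarrow> walk s m x \<noteq> Some x"
  shows "inj_on (\<lambda>i. the (walk s i x)) {0..t}"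
proof -
  have some: "walk s i x = Some (the (walk s i x))" if "i \<le> t" for i
    using walk_defined_below[OF defined that] by simp
  have "i = j" if ij: "i \<le> j" "j \<le> t" "the (walk s i x) = the (walk s j x)" for i j
  proof (rule ccontr)
    assume "i \<noteq> j"
    have wi: "walk s i x = Some (the (walk s i x))" using some ij(1,2) by simp
    have wj: "walk s j x = Some (the (walk s i x))" using some[OF ij(2)] ij(3) by simp
    have "walk s (j - i) x = Some x" by (rule walk_cancel[where P=P and s=s, OF inj cl \<open>P x\<close> wi wj ij(1)])
    moreover have "j - i \<in> {1..t}" using ij \<open>i \<noteq> j\<close> by auto
    ultimately show False using acyclic by blast
  qed
  then show ?thesis by (intro inj_onI) (metis atLeastAtMost_iff nat_le_linear)
qed

section \<open>The output rule on an abstract view\<close>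

text \<open>The rule is evaluated on a \<^emph>\<open>view\<close>: \<open>N x j\<close> is the neighbour of \<open>x\<close> through port \<open>j\<close> and
  \<open>Q x\<close> is what a query reveals about \<open>x\<close>.  On the graph itself the view is \<open>(port I, obs I)\<close>;
  inside the algorithm it is the gathered ball, whose nodes are port sequences, so nodes are
  compared through their identifiers only.\<close>

type_synonym observation = "nat \<times> nat \<times> label"

definition obs_ident :: "(nat \<Rightarrow> observation) \<Rightarrow> nat \<Rightarrow> nat" where
  "obs_ident Q x = fst (Q x)"

definition obs_label :: "(nat \<Rightarrow> observation) \<Rightarrow> nat \<Rightarrow> label" where
  "obs_label Q x = snd (snd (Q x))"

primrec level_within :: "(nat \<Rightarrow> nat \<Rightarrow> nat) \<Rightarrow> (nat \<Rightarrow> observation) \<Rightarrow> nat \<Rightarrow> nat \<Rightarrow> nat option" where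
  "level_within N Q 0 x = None"
| "level_within N Q (Suc f) x =
     (case rc (obs_label Q x) of None \<Rightarrow> Some 1 | Some j \<Rightarrow> map_option Suc (level_within N Q f (N x j)))"

definition links_back :: "(nat \<Rightarrow> nat \<Rightarrow> nat) \<Rightarrow> (nat \<Rightarrow> observation) \<Rightarrow> nat \<Rightarrow> nat option \<Rightarrow> nat \<Rightarrow> bool" where
  "links_back N Q c p x = (case p of None \<Rightarrow> False | Some j \<Rightarrow> obs_ident Q (N c j) = obs_ident Q x)"

text \<open>Follow the pointer \<open>fwd\<close> of \<open>x\<close> if the resulting edge lies in \<open>G\<^sub>k\<close>: the target's pointer
  \<open>bwd\<close> leads back to \<open>x\<close> and, if \<open>same_level\<close>, both have the same level.\<close>
definition guarded_step :: "(label \<Rightarrow> nat option) \<Rightarrow> (label \<Rightarrow> nat option) \<Rightarrow> bool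
    \<Rightarrow> (nat \<Rightarrow> nat \<Rightarrow> nat) \<Rightarrow> (nat \<Rightarrow> observation) \<Rightarrow> nat \<Rightarrow> nat \<Rightarrow> nat option" where
  "guarded_step fwd bwd same_level N Q k x = (case fwd (obs_label Q x) of None \<Rightarrow> None | Some j \<Rightarrow>
     (if level_within N Q k x \<noteq> None
         \<and> (same_level \<longrightarrow> level_within N Q k (N x j) = level_within N Q k x)
         \<and> links_back N Q (N x j) (bwd (obs_label Q (N x j))) x
      then Some (N x j) else None))"

abbreviation "lc_child \<equiv> guarded_step lc par True"
abbreviation "lc_parent \<equiv> guarded_step par lc True"
abbreviation "rc_child \<equiv> guarded_step rc par False"

definition on_short_cycle :: "nat \<Rightarrow> (nat \<Rightarrow> observation) \<Rightarrow> (nat \<Rightarrow> nat option) \<Rightarrow> nat \<Rightarrow> bool" where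
  "on_short_cycle t Q up x = (\<exists>m\<in>{1..t}. \<exists>z. walk up m x = Some z \<and> obs_ident Q z = obs_ident Q x)"

definition chain_color :: "nat \<Rightarrow> (nat \<Rightarrow> observation) \<Rightarrow> (nat \<Rightarrow> nat option) \<Rightarrow> (nat \<Rightarrow> nat option)
    \<Rightarrow> nat \<Rightarrow> color" where
  "chain_color t Q up down x = (if on_short_cycle t Q up x then R
     else case walk_end up t x of None \<Rightarrow> D
       | Some T \<Rightarrow> (case walk_end down (t - 1) T of None \<Rightarrow> D | Some b \<Rightarrow> cin (obs_label Q b)))"

text \<open>\<open>is_good N Q k l h\<close> decides goodness on level \<open>l + 1\<close>, where \<open>h\<close> are the outputs on level \<open>l\<close>.\<close>
definition is_good :: "(nat \<Rightarrow> nat \<Rightarrow> nat) \<Rightarrow> (nat \<Rightarrow> observation) \<Rightarrow> nat \<Rightarrow> nat \<Rightarrow> (nat \<Rightarrow> color)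
    \<Rightarrow> nat \<Rightarrow> bool" where
  "is_good N Q k l h y = (1 \<le> l \<and> (case rc_child N Q k y of None \<Rightarrow> True | Some u \<Rightarrow> h u \<noteq> D))"

definition avoiding :: "(nat \<Rightarrow> bool) \<Rightarrow> (nat \<Rightarrow> nat option) \<Rightarrow> nat \<Rightarrow> nat option" where
  "avoiding g s y = (if g y then None else case s y of None \<Rightarrow> None | Some c \<Rightarrow> if g c then None else Some c)"

primrec level_out :: "(nat \<Rightarrow> nat \<Rightarrow> nat) \<Rightarrow> (nat \<Rightarrow> observation) \<Rightarrow> nat \<Rightarrow> nat \<Rightarrow> nat \<Rightarrow> nat \<Rightarrow> color" where
  "level_out N Q k t 0 x = X"
| "level_out N Q k t (Suc l) x =
     (let good = is_good N Q k l (level_out N Q k t l) in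
      if good x then X
      else chain_color t Q (avoiding good (lc_parent N Q k)) (avoiding good (lc_child N Q k)) x)"

definition local_out :: "(nat \<Rightarrow> nat \<Rightarrow> nat) \<Rightarrow> (nat \<Rightarrow> observation) \<Rightarrow> nat \<Rightarrow> nat \<Rightarrow> nat \<Rightarrow> color" where
  "local_out N Q k t x = (case level_within N Q k x of None \<Rightarrow> X | Some l \<Rightarrow> level_out N Q k t l x)"

text \<open>How far along tree pointers \<open>level_out N Q k t l\<close> looks.\<close>
primrec radius :: "nat \<Rightarrow> nat \<Rightarrow> nat \<Rightarrow> nat" where
  "radius k t 0 = 0"
| "radius k t (Suc l) = 2 * t + 2 + max (k + 2) (1 + radius k t l)"

lemma radius_mono: "l \<le> l' \<Longrightarrow> radius k t l \<le> radius k t l'"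
  by (rule lift_Suc_mono_le[of "radius k t"]) auto

lemma radius_le: "radius k t l \<le> l * (2 * t + 3) + k + 1"
  by (induction l) auto

lemma radius_ge: "1 \<le> l \<Longrightarrow> k + 2 \<le> radius k t l"
  by (cases l) auto

section \<open>Locality of the output rule\<close>

text \<open>\<open>agree r a\<close>: the view 1 around \<open>a\<close> coincides, via \<open>emb\<close>, with the view 2 around \<open>emb a\<close>
  for \<open>r\<close> steps along tree pointers.\<close>
locale view_sim =
  fixes N1 :: "nat \<Rightarrow> nat \<Rightarrow> nat" and Q1 :: "nat \<Rightarrow> observation"
    and N2 :: "nat \<Rightarrow> nat \<Rightarrow> nat" and Q2 :: "nat \<Rightarrow> observation"
    and emb :: "nat \<Rightarrow> nat" and agree :: "nat \<Rightarrow> nat \<Rightarrow> bool"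
  assumes agree_obs: "agree r a \<Longrightarrow> Q1 a = Q2 (emb a)"
    and agree_mono: "agree r a \<Longrightarrow> r' \<le> r \<Longrightarrow> agree r' a"
    and agree_step: "agree (Suc r) a \<Longrightarrow> p \<in> {par, lc, rc} \<Longrightarrow> p (obs_label Q1 a) = Some j
      \<Longrightarrow> agree r (N1 a j) \<and> emb (N1 a j) = N2 (emb a) j"
begin

lemma obs_label_eq: "agree r a \<Longrightarrow> obs_label Q1 a = obs_label Q2 (emb a)"
  by (simp add: obs_label_def agree_obs)

lemma obs_ident_eq: "agree r a \<Longrightarrow> obs_ident Q1 a = obs_ident Q2 (emb a)"
  by (simp add: obs_ident_def agree_obs)

lemma level_within_sim: "agree r a \<Longrightarrow> f \<le> r \<Longrightarrow> level_within N1 Q1 f a = level_within N2 Q2 f (emb a)"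
proof (induction f arbitrary: a r)
  case 0 then show ?case by simp
next
  case (Suc f)
  then obtain r' where r: "r = Suc r'" by (cases r) auto
  show ?case
  proof (cases "rc (obs_label Q1 a)")
    case None then show ?thesis using Suc.prems by (simp add: obs_label_eq[symmetric])
  next
    case (Some j)
    have "agree r' (N1 a j)" "emb (N1 a j) = N2 (emb a) j" using agree_step Suc.prems Some r by blast+
    then show ?thesis using Suc Some r by (simp add: obs_label_eq[symmetric])
  qed
qed

definition sim_opt :: "nat \<Rightarrow> nat option \<Rightarrow> nat option \<Rightarrow> bool" where
  "sim_opt r s1 s2 \<longleftrightarrow> s2 = map_option emb s1 \<and> (\<forall>c. s1 = Some c \<longrightarrow> agree r c)"

text \<open>Corresponding steps from nodes of depth at least \<open>cs\<close> correspond again, one unit of depth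
  being used up.\<close>
definition sim_step :: "(nat \<Rightarrow> nat option) \<Rightarrow> (nat \<Rightarrow> nat option) \<Rightarrow> nat \<Rightarrow> bool" where
  "sim_step s1 s2 cs \<longleftrightarrow> (\<forall>r a. agree r a \<longrightarrow> cs \<le> r \<longrightarrow> sim_opt (r - 1) (s1 a) (s2 (emb a)))"

lemma sim_stepD: "sim_step s1 s2 cs \<Longrightarrow> agree r a \<Longrightarrow> cs \<le> r \<Longrightarrow> sim_opt (r - 1) (s1 a) (s2 (emb a))"
  unfolding sim_step_def by blast

lemma guarded_step_sim:
  assumes "fwd \<in> {par, lc, rc}" "bwd \<in> {par, lc, rc}"
  shows "sim_step (guarded_step fwd bwd same N1 Q1 k) (guarded_step fwd bwd same N2 Q2 k) (k + 2)"
  unfolding sim_step_def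
proof (intro allI impI)
  fix r a assume a: "agree r a" "k + 2 \<le> r"
  show "sim_opt (r - 1) (guarded_step fwd bwd same N1 Q1 k a) (guarded_step fwd bwd same N2 Q2 k (emb a))"
  proof (cases "fwd (obs_label Q1 a)")
    case None then show ?thesis using a by (simp add: guarded_step_def sim_opt_def obs_label_eq[symmetric])
  next
    case (Some j)
    obtain r' where r: "r = Suc (Suc r')" using a(2) by (intro that[of "r - 2"]) simp
    let ?c = "N1 a j"
    have c: "agree (Suc r') ?c" "emb ?c = N2 (emb a) j" using agree_step a assms(1) Some r by blast+
    have lev: "level_within N1 Q1 k a = level_within N2 Q2 k (emb a)"
      "level_within N1 Q1 k ?c = level_within N2 Q2 k (emb ?c)"
      using level_within_sim a c r by auto
    have bwd: "links_back N1 Q1 ?c (bwd (obs_label Q1 ?c)) a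
        = links_back N2 Q2 (emb ?c) (bwd (obs_label Q2 (emb ?c))) (emb a)"
    proof (cases "bwd (obs_label Q1 ?c)")
      case (Some i)
      have "agree r' (N1 ?c i)" "emb (N1 ?c i) = N2 (emb ?c) i" using agree_step c(1) assms(2) Some by blast+
      then show ?thesis using Some a(1) c(1) by (simp add: links_back_def obs_ident_eq obs_label_eq[symmetric])
    qed (simp add: links_back_def obs_label_eq[symmetric, OF c(1)])
    have "fwd (obs_label Q2 (emb a)) = Some j" using Some obs_label_eq[OF a(1)] by simp
    then show ?thesis using Some lev bwd c r by (auto simp: guarded_step_def sim_opt_def agree_mono)
  qed
qed

lemma avoiding_sim:
  assumes s: "sim_step s1 s2 cs"
    and g: "\<And>r y. agree r y \<Longrightarrow> G \<le> r \<Longrightarrow> g1 y = g2 (emb y)" and "cs \<le> G"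
  shows "sim_step (avoiding g1 s1) (avoiding g2 s2) (1 + G)"
  unfolding sim_step_def
proof (intro allI impI)
  fix r a assume a: "agree r a" "1 + G \<le> r"
  have ga: "g1 a = g2 (emb a)" using g a by simp
  have o: "sim_opt (r - 1) (s1 a) (s2 (emb a))" using sim_stepD[OF s a(1)] a(2) \<open>cs \<le> G\<close> by simp
  show "sim_opt (r - 1) (avoiding g1 s1 a) (avoiding g2 s2 (emb a))"
  proof (cases "s1 a")
    case None then show ?thesis using o ga by (simp add: avoiding_def sim_opt_def)
  next
    case (Some c)
    then have c: "agree (r - 1) c" "s2 (emb a) = Some (emb c)" using o by (auto simp: sim_opt_def)
    have "g1 c = g2 (emb c)" using g c a by simp
    then show ?thesis using Some c ga by (simp add: avoiding_def sim_opt_def)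
  qed
qed

lemma is_good_sim:
  assumes "agree r y" "max (k + 2) (1 + c) \<le> r"
    and h: "\<And>r' u. agree r' u \<Longrightarrow> c \<le> r' \<Longrightarrow> h1 u = h2 (emb u)"
  shows "is_good N1 Q1 k l h1 y = is_good N2 Q2 k l h2 (emb y)"
proof -
  have o: "sim_opt (r - 1) (rc_child N1 Q1 k y) (rc_child N2 Q2 k (emb y))"
    using sim_stepD[OF guarded_step_sim] assms by simp
  show ?thesis
  proof (cases "rc_child N1 Q1 k y")
    case None then show ?thesis using o by (simp add: is_good_def sim_opt_def)
  next
    case (Some u)
    then have "agree (r - 1) u" "rc_child N2 Q2 k (emb y) = Some (emb u)" using o by (auto simp: sim_opt_def)
    moreover have "h1 u = h2 (emb u)" using h calculation assms by simp
    ultimately show ?thesis using Some by (simp add: is_good_def)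
  qed
qed

lemma walk_sim:
  assumes "sim_step s1 s2 cs"
  shows "agree r a \<Longrightarrow> m + cs \<le> r \<Longrightarrow> sim_opt (r - m) (walk s1 m a) (walk s2 m (emb a))"
proof (induction m arbitrary: a r)
  case 0 then show ?case by (simp add: sim_opt_def)
next
  case (Suc m)
  have o: "sim_opt (r - 1) (s1 a) (s2 (emb a))" using sim_stepD[OF assms] Suc.prems by simp
  show ?case
  proof (cases "s1 a")
    case None then show ?thesis using o by (simp add: sim_opt_def)
  next
    case (Some c)
    then have c: "agree (r - 1) c" "s2 (emb a) = Some (emb c)" using o by (auto simp: sim_opt_def)
    have "sim_opt (r - 1 - m) (walk s1 m c) (walk s2 m (emb c))" using Suc.IH[OF c(1)] Suc.prems by simp
    then show ?thesis using Some c by (simp add: sim_opt_def)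
  qed
qed

lemma walk_end_sim:
  assumes "sim_step s1 s2 cs"
  shows "agree r a \<Longrightarrow> f + cs \<le> r \<Longrightarrow> sim_opt (r - f) (walk_end s1 f a) (walk_end s2 f (emb a))"
proof (induction f arbitrary: a r)
  case 0
  have o: "sim_opt (r - 1) (s1 a) (s2 (emb a))" using sim_stepD[OF assms] 0 by simp
  then show ?case using 0 by (cases "s1 a") (auto simp: sim_opt_def)
next
  case (Suc f)
  have o: "sim_opt (r - 1) (s1 a) (s2 (emb a))" using sim_stepD[OF assms] Suc.prems by simp
  show ?case
  proof (cases "s1 a")
    case None then show ?thesis using o Suc.prems agree_mono[OF Suc.prems(1), of "r - Suc f"] by (simp add: sim_opt_def)
  next
    case (Some c)
    then have c: "agree (r - 1) c" "s2 (emb a) = Some (emb c)" using o by (auto simp: sim_opt_def)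
    have "sim_opt (r - 1 - f) (walk_end s1 f c) (walk_end s2 f (emb c))" using Suc.IH[OF c(1)] Suc.prems by simp
    then show ?thesis using Some c by (simp add: sim_opt_def)
  qed
qed

lemma on_short_cycle_sim:
  assumes "sim_step up1 up2 cs" "agree r a" "t + cs \<le> r"
  shows "on_short_cycle t Q1 up1 a = on_short_cycle t Q2 up2 (emb a)"
proof -
  have "(\<exists>z. walk up1 m a = Some z \<and> obs_ident Q1 z = obs_ident Q1 a)
      = (\<exists>z. walk up2 m (emb a) = Some z \<and> obs_ident Q2 z = obs_ident Q2 (emb a))" if "m \<le> t" for m
  proof -
    have o: "sim_opt (r - m) (walk up1 m a) (walk up2 m (emb a))" using walk_sim assms that by simp
    then show ?thesis using obs_ident_eq assms(2) by (cases "walk up1 m a") (auto simp: sim_opt_def)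
  qed
  then show ?thesis unfolding on_short_cycle_def by auto
qed

lemma chain_color_sim:
  assumes up: "sim_step up1 up2 cs" and down: "sim_step down1 down2 cs" and a: "agree r a" "2 * t + cs \<le> r"
  shows "chain_color t Q1 up1 down1 a = chain_color t Q2 up2 down2 (emb a)"
proof -
  have cyc: "on_short_cycle t Q1 up1 a = on_short_cycle t Q2 up2 (emb a)"
    using on_short_cycle_sim[OF up a(1)] a(2) by simp
  have o1: "sim_opt (r - t) (walk_end up1 t a) (walk_end up2 t (emb a))" using walk_end_sim[OF up a(1)] a by simp
  show ?thesis
  proof (cases "walk_end up1 t a")
    case None then show ?thesis using o1 cyc by (simp add: chain_color_def sim_opt_def)
  next
    case (Some T)
    then have T: "agree (r - t) T" "walk_end up2 t (emb a) = Some (emb T)" using o1 by (auto simp: sim_opt_def)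
    have o2: "sim_opt (r - t - (t - 1)) (walk_end down1 (t - 1) T) (walk_end down2 (t - 1) (emb T))"
      using walk_end_sim[OF down T(1)] a by simp
    then show ?thesis using Some T cyc obs_label_eq
      by (cases "walk_end down1 (t - 1) T") (auto simp: chain_color_def sim_opt_def)
  qed
qed

lemma level_out_sim:
  "agree r a \<Longrightarrow> radius k t l \<le> r \<Longrightarrow> level_out N1 Q1 k t l a = level_out N2 Q2 k t l (emb a)"
proof (induction l arbitrary: a r)
  case 0 then show ?case by simp
next
  case (Suc l)
  define G where "G = max (k + 2) (1 + radius k t l)"
  let ?good1 = "is_good N1 Q1 k l (level_out N1 Q1 k t l)"
  let ?good2 = "is_good N2 Q2 k l (level_out N2 Q2 k t l)"
  have good: "\<And>r y. agree r y \<Longrightarrow> G \<le> r \<Longrightarrow> ?good1 y = ?good2 (emb y)"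
    using is_good_sim Suc.IH unfolding G_def by blast
  have "k + 2 \<le> G" unfolding G_def by simp
  have up: "sim_step (avoiding ?good1 (lc_parent N1 Q1 k)) (avoiding ?good2 (lc_parent N2 Q2 k)) (1 + G)"
    and down: "sim_step (avoiding ?good1 (lc_child N1 Q1 k)) (avoiding ?good2 (lc_child N2 Q2 k)) (1 + G)"
    by (rule avoiding_sim[where G=G, OF guarded_step_sim]; use good \<open>k + 2 \<le> G\<close> in auto)+
  have "radius k t (Suc l) = 2 * t + 2 + G" unfolding G_def by simp
  then show ?case using good chain_color_sim[OF up down Suc.prems(1)] Suc.prems by (simp add: Let_def)
qed

lemma level_within_le: "level_within N Q f x = Some l \<Longrightarrow> l \<le> f"
  by (induction f arbitrary: x l) (auto split: option.splits)

lemma local_out_sim: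
  assumes "agree r a" "radius k t k \<le> r" "k \<le> r"
  shows "local_out N1 Q1 k t a = local_out N2 Q2 k t (emb a)"
  unfolding local_out_def using assms level_within_sim[of r a k] level_out_sim radius_mono level_within_le
  by (auto split: option.splits) (meson le_trans)

end

section \<open>Levels\<close>

lemma has_level_unique: "has_level I v l1 \<Longrightarrow> has_level I v l2 \<Longrightarrow> l1 = l2"
proof (induction arbitrary: l2 rule: has_level.induct)
  case (base v) from base.prems show ?case by (cases rule: has_level.cases) (use base in auto)
next
  case (step v j l)
  from step.prems show ?case
  proof (cases rule: has_level.cases)
    case base then show ?thesis using step.hyps(1) by simp
  next
    case (step j' l')
    then show ?thesis using step.hyps(1) step.IH by simp
  qed
qed

lemma level_eq_Some_iff: "level I v = Some l \<longleftrightarrow> has_level I v l"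
proof
  assume "level I v = Some l"
  then obtain l0 where h: "has_level I v l0" and e: "l = (THE l. has_level I v l)" unfolding level_def by (auto split: if_splits)
  have "(THE l. has_level I v l) = l0" using h has_level_unique by blast
  then show "has_level I v l" using h e by simp
next
  assume h: "has_level I v l"
  have "(THE l. has_level I v l) = l" using h has_level_unique by blast
  then show "level I v = Some l" using h unfolding level_def by auto
qed

lemma has_level_rc_None: "rc (lab I v) = None \<Longrightarrow> has_level I v l \<longleftrightarrow> l = 1"
  using has_level.base[of I v] by (auto elim: has_level.cases)

lemma has_level_rc_Some: "rc (lab I v) = Some j \<Longrightarrow> has_level I v l \<longleftrightarrow> (\<exists>l'. l = Suc l' \<and> has_level I (port I v j) l')"
  by (auto elim: has_level.cases intro: has_level.step)

lemma obs_label_obs[simp]: "obs_label (obs I) x = lab I x" by (simp add: obs_label_def obs_def)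
lemma obs_ident_obs[simp]: "obs_ident (obs I) x = ident I x" by (simp add: obs_ident_def obs_def)

lemma level_within_port_iff: "level_within (port I) (obs I) f x = Some l \<longleftrightarrow> has_level I x l \<and> l \<le> f"
proof (induction f arbitrary: x l)
  case 0 then show ?case using has_level.cases by fastforce
next
  case (Suc f)
  show ?case
  proof (cases "rc (lab I x)")
    case None then show ?thesis using has_level_rc_None by auto
  next
    case (Some j)
    show ?thesis using Some Suc.IH has_level_rc_Some[OF Some] by (cases l) auto
  qed
qed

lemma has_level_ge_1: "has_level I x l \<Longrightarrow> 1 \<le> l"
  by (induction rule: has_level.induct) auto

section \<open>Labeled graphs\<close>

locale labeled_graph =
  fixes \<Delta> :: nat and \<alpha> :: real and n :: nat and I :: inst
  assumes graph: "valid_graph \<Delta> \<alpha> n I" and labeling: "colored_tree_labeling \<Delta> n I"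
begin

lemma port_lt: "x < n \<Longrightarrow> 1 \<le> j \<Longrightarrow> j \<le> deg I x \<Longrightarrow> port I x j < n"
  using graph unfolding valid_graph_def by blast

lemma deg_le: "x < n \<Longrightarrow> deg I x \<le> \<Delta>"
  using graph unfolding valid_graph_def by blast

lemma port_inj: "x < n \<Longrightarrow> j1 \<in> {1..deg I x} \<Longrightarrow> j2 \<in> {1..deg I x} \<Longrightarrow> port I x j1 = port I x j2 \<Longrightarrow> j1 = j2"
  using graph unfolding valid_graph_def by (meson inj_onD)

lemma ident_inj: "x < n \<Longrightarrow> y < n \<Longrightarrow> ident I x = ident I y \<Longrightarrow> x = y"
  using graph inj_onD[of "ident I" "{0..<n}" x y] unfolding valid_graph_def by simp

lemma label_valid: "x < n \<Longrightarrow> valid_port_label \<Delta> I x (par (lab I x)) \<and>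
            valid_port_label \<Delta> I x (lc (lab I x)) \<and>
            valid_port_label \<Delta> I x (rc (lab I x)) \<and>
            (par (lab I x) \<noteq> None \<longrightarrow> par (lab I x) \<noteq> lc (lab I x)) \<and>
            (par (lab I x) \<noteq> None \<longrightarrow> par (lab I x) \<noteq> rc (lab I x)) \<and>
            (lc (lab I x) \<noteq> None \<longrightarrow> lc (lab I x) \<noteq> rc (lab I x)) \<and>
            cin (lab I x) \<in> {R, B}"
  using labeling unfolding colored_tree_labeling_def by blast

lemma pointer_port:
  assumes "x < n" "par (lab I x) = Some j \<or> lc (lab I x) = Some j \<or> rc (lab I x) = Some j"
  shows "1 \<le> j" "j \<le> deg I x" "j \<le> \<Delta>" "port I x j < n"
  using label_valid[OF assms(1)] assms port_lt unfolding valid_port_label_def by blast+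

lemma cin_RB: "x < n \<Longrightarrow> cin (lab I x) \<in> {R, B}" using label_valid by blast

lemma pointer_targets_distinct:
  assumes "x < n" "p1 = Some j1" "p2 = Some j2" "p1 \<noteq> p2"
    "p1 = par (lab I x) \<or> p1 = lc (lab I x) \<or> p1 = rc (lab I x)"
    "p2 = par (lab I x) \<or> p2 = lc (lab I x) \<or> p2 = rc (lab I x)"
  shows "port I x j1 \<noteq> port I x j2"
proof
  assume e: "port I x j1 = port I x j2"
  have "j1 \<in> {1..deg I x}" "j2 \<in> {1..deg I x}" using pointer_port[OF assms(1)] assms by (metis atLeastAtMost_iff)+
  then have "j1 = j2" using port_inj assms(1) e by blast
  then show False using assms by simp
qed

lemma links_back_port_iff:
  assumes "c < n" "x < n" "p = par (lab I c) \<or> p = lc (lab I c)"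
  shows "links_back (port I) (obs I) c p x \<longleftrightarrow> (\<exists>j. p = Some j \<and> port I c j = x)"
proof (cases p)
  case None then show ?thesis by (simp add: links_back_def)
next
  case (Some j)
  have "port I c j < n" using pointer_port assms Some by metis
  then show ?thesis using Some ident_inj assms by (auto simp: links_back_def)
qed

lemma pointer_le_deg: "x < n \<Longrightarrow> p \<in> {par, lc, rc} \<Longrightarrow> p (lab I x) = Some j \<Longrightarrow> 1 \<le> j \<and> j \<le> deg I x"
  using pointer_port by blast

end

section \<open>Correctness of the output rule on the graph\<close>

locale hthc_instance = labeled_graph +
  fixes k :: nat and t :: nat
  assumes k_pos: "1 \<le> k" and t_pos: "1 \<le> t" and n_lt: "n < (t + 1) ^ k"
begin

abbreviation "lev x \<equiv> level_within (port I) (obs I) k x"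

lemma lev_iff: "lev x = Some l \<longleftrightarrow> level I x = Some l \<and> l \<le> k"
  using level_within_port_iff level_eq_Some_iff by auto

lemma lev_ge_1: "lev x = Some l \<Longrightarrow> 1 \<le> l"
  using level_within_port_iff has_level_ge_1 by blast

lemma not_gk_child_along_child_pointer:
  assumes "x < n" "p \<in> {lc, rc}" "p (lab I x) = Some j"
  shows "\<not> gk_child I k x (port I x j)"
proof
  assume "gk_child I k x (port I x j)"
  then obtain j' where "par (lab I x) = Some j'" "port I x j' = port I x j" by (auto simp: gk_child_def nbr_def)
  then show False
    using pointer_targets_distinct[OF assms(1), of "par (lab I x)" j' "p (lab I x)" j] assms label_valid[OF assms(1)]
    by auto
qed

lemma lev_same_iff: "(\<exists>l. level I c = Some l \<and> level I x = Some l \<and> l \<le> k) \<longleftrightarrow> lev x \<noteq> None \<and> lev c = lev x"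
proof
  assume "\<exists>l. level I c = Some l \<and> level I x = Some l \<and> l \<le> k"
  then show "lev x \<noteq> None \<and> lev c = lev x" using lev_iff by (metis option.distinct(1))
next
  assume "lev x \<noteq> None \<and> lev c = lev x"
  then obtain l where "lev x = Some l" "lev c = Some l" by auto
  then show "\<exists>l. level I c = Some l \<and> level I x = Some l \<and> l \<le> k" using lev_iff by blast
qed

lemma lev_rc_iff:
  assumes "rc (lab I x) = Some j"
  shows "(\<exists>l. level I (port I x j) = Some l \<and> level I x = Some (Suc l) \<and> Suc l \<le> k) \<longleftrightarrow> lev x \<noteq> None"
proof
  assume "\<exists>l. level I (port I x j) = Some l \<and> level I x = Some (Suc l) \<and> Suc l \<le> k"
  then obtain l where "level I x = Some (Suc l)" "Suc l \<le> k" by blast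
  then show "lev x \<noteq> None" using lev_iff by simp
next
  assume "lev x \<noteq> None"
  then obtain L where L: "has_level I x L" "L \<le> k" using level_within_port_iff by fastforce
  then obtain l where "L = Suc l" "has_level I (port I x j) l" using has_level_rc_Some[OF assms] by blast
  then show "\<exists>l. level I (port I x j) = Some l \<and> level I x = Some (Suc l) \<and> Suc l \<le> k"
    using L level_eq_Some_iff by auto
qed

lemma lc_child_eq_LCk: assumes "x < n" shows "lc_child (port I) (obs I) k x = LCk I k x"
proof (cases "lc (lab I x)")
  case None then show ?thesis by (simp add: guarded_step_def LCk_def eff_def nbr_def)
next
  case (Some j)
  let ?c = "port I x j"
  have "?c < n" using pointer_port assms Some by metis
  then have links: "links_back (port I) (obs I) ?c (par (lab I ?c)) x \<longleftrightarrow> nbr I ?c (par (lab I ?c)) = Some x"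
    using links_back_port_iff[OF _ assms] by (auto simp: nbr_def)
  have "rc (lab I x) = Some j' \<Longrightarrow> port I x j' \<noteq> ?c" for j'
    using pointer_targets_distinct[OF assms, of "rc (lab I x)" j' "lc (lab I x)" j] Some label_valid[OF assms] by auto
  then have "gk_child I k ?c x
      \<longleftrightarrow> (\<exists>l. level I ?c = Some l \<and> level I x = Some l \<and> l \<le> k) \<and> nbr I ?c (par (lab I ?c)) = Some x"
    unfolding gk_child_def using Some by (auto simp: nbr_def)
  then have "gk_edge I k x ?c \<longleftrightarrow> lev x \<noteq> None \<and> lev ?c = lev x \<and> links_back (port I) (obs I) ?c (par (lab I ?c)) x"
    unfolding gk_edge_def lev_same_iff links using not_gk_child_along_child_pointer[of x lc j] assms Some by auto
  then show ?thesis using Some by (simp add: guarded_step_def LCk_def eff_def nbr_def)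
qed

lemma LCk_SomeD:
  assumes "x < n" "LCk I k x = Some c"
  shows "c < n" "lev c = lev x" "lev x \<noteq> None" "\<exists>j. par (lab I c) = Some j \<and> port I c j = x"
    "\<exists>j. lc (lab I x) = Some j \<and> port I x j = c"
proof -
  have "lc_child (port I) (obs I) k x = Some c" using lc_child_eq_LCk assms by simp
  then obtain j where j: "lc (lab I x) = Some j" and c: "c = port I x j"
    and cond: "lev x \<noteq> None \<and> lev c = lev x \<and> links_back (port I) (obs I) c (par (lab I c)) x"
    by (auto simp: guarded_step_def split: option.splits if_splits)
  show cn: "c < n" using pointer_port[OF assms(1)] j c by metis
  show "lev c = lev x" "lev x \<noteq> None" using cond by auto
  show "\<exists>j. par (lab I c) = Some j \<and> port I c j = x" using cond links_back_port_iff[OF cn assms(1)] by blast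
  show "\<exists>j. lc (lab I x) = Some j \<and> port I x j = c" using j c by blast
qed

lemma lc_parent_iff:
  assumes "c < n"
  shows "lc_parent (port I) (obs I) k c = Some x \<longleftrightarrow> x < n \<and> LCk I k x = Some c"
proof
  assume "lc_parent (port I) (obs I) k c = Some x"
  then obtain j where j: "par (lab I c) = Some j" and x: "x = port I c j"
    and cond: "lev c \<noteq> None \<and> lev x = lev c \<and> links_back (port I) (obs I) x (lc (lab I x)) c"
    by (auto simp: guarded_step_def split: option.splits if_splits)
  have xn: "x < n" using pointer_port[OF assms] j x by metis
  obtain j' where j': "lc (lab I x) = Some j'" "port I x j' = c" using cond links_back_port_iff[OF xn assms] by blast
  have "links_back (port I) (obs I) c (par (lab I c)) x" using links_back_port_iff[OF assms xn] j x by blast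
  then have "lc_child (port I) (obs I) k x = Some c" using j' cond by (simp add: guarded_step_def)
  then show "x < n \<and> LCk I k x = Some c" using lc_child_eq_LCk xn by simp
next
  assume a: "x < n \<and> LCk I k x = Some c"
  have xn: "x < n" using a by simp
  have lcx: "LCk I k x = Some c" using a by simp
  obtain j where j: "par (lab I c) = Some j" "port I c j = x" using LCk_SomeD(4)[OF xn lcx] by blast
  have "\<exists>j. lc (lab I x) = Some j \<and> port I x j = c" using LCk_SomeD(5)[OF xn lcx] .
  then have "links_back (port I) (obs I) x (lc (lab I x)) c" using links_back_port_iff[OF xn assms, of "lc (lab I x)"] by simp
  then show "lc_parent (port I) (obs I) k c = Some x" using j LCk_SomeD(2,3)[OF xn lcx] by (simp add: guarded_step_def)
qed

lemma rc_child_eq_RCk: assumes "x < n" shows "rc_child (port I) (obs I) k x = RCk I k x"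
proof (cases "rc (lab I x)")
  case None then show ?thesis by (simp add: guarded_step_def RCk_def eff_def nbr_def)
next
  case (Some j)
  let ?c = "port I x j"
  have "?c < n" using pointer_port assms Some by metis
  then have links: "links_back (port I) (obs I) ?c (par (lab I ?c)) x \<longleftrightarrow> nbr I ?c (par (lab I ?c)) = Some x"
    using links_back_port_iff[OF _ assms] by (auto simp: nbr_def)
  have "lc (lab I x) = Some j' \<Longrightarrow> port I x j' \<noteq> ?c" for j'
    using pointer_targets_distinct[OF assms, of "lc (lab I x)" j' "rc (lab I x)" j] Some label_valid[OF assms] by auto
  then have "gk_child I k ?c x \<longleftrightarrow>
      (\<exists>l. level I ?c = Some l \<and> level I x = Some (Suc l) \<and> Suc l \<le> k) \<and> nbr I ?c (par (lab I ?c)) = Some x"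
    unfolding gk_child_def using Some by (auto simp: nbr_def)
  then have "gk_edge I k x ?c \<longleftrightarrow> lev x \<noteq> None \<and> links_back (port I) (obs I) ?c (par (lab I ?c)) x"
    unfolding gk_edge_def lev_rc_iff[OF Some] links using not_gk_child_along_child_pointer[of x rc j] assms Some by auto
  then show ?thesis using Some by (simp add: guarded_step_def RCk_def eff_def nbr_def)
qed

lemma RCk_SomeD:
  assumes "x < n" "RCk I k x = Some u" "lev x = Some L"
  shows "u < n" "\<exists>j. par (lab I u) = Some j \<and> port I u j = x" "\<exists>j. rc (lab I x) = Some j \<and> port I x j = u"
    "\<exists>l. L = Suc l \<and> lev u = Some l"
proof -
  have "rc_child (port I) (obs I) k x = Some u" using rc_child_eq_RCk assms by simp
  then obtain j where j: "rc (lab I x) = Some j" and c: "u = port I x j"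
    and cond: "lev x \<noteq> None \<and> links_back (port I) (obs I) u (par (lab I u)) x"
    by (auto simp: guarded_step_def split: option.splits if_splits)
  show cn: "u < n" using pointer_port[OF assms(1)] j c by metis
  show "\<exists>j. par (lab I u) = Some j \<and> port I u j = x" using cond links_back_port_iff[OF cn assms(1)] by blast
  show "\<exists>j. rc (lab I x) = Some j \<and> port I x j = u" using j c by blast
  have "has_level I x L" "L \<le> k" using assms(3) level_within_port_iff by auto
  then obtain l' where "L = Suc l'" "has_level I u l'" using has_level_rc_Some[OF j] c by blast
  then show "\<exists>l. L = Suc l \<and> lev u = Some l" using level_within_port_iff \<open>L \<le> k\<close> by auto
qed

lemma RCk_not_LCk:
  assumes "y < n" "RCk I k y = Some u" "x < n" "LCk I k x = Some u" "lev y = Some L"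
  shows False
proof -
  obtain j1 where j1: "par (lab I u) = Some j1" "port I u j1 = y" using RCk_SomeD(2)[OF assms(1,2,5)] by blast
  obtain j2 where j2: "par (lab I u) = Some j2" "port I u j2 = x" using LCk_SomeD(4)[OF assms(3,4)] by blast
  have "x = y" using j1 j2 by simp
  obtain a where a: "rc (lab I y) = Some a" "port I y a = u" using RCk_SomeD(3)[OF assms(1,2,5)] by blast
  obtain b where b: "lc (lab I y) = Some b" "port I y b = u" using LCk_SomeD(5)[OF assms(3,4)] \<open>x = y\<close> by blast
  show False using pointer_targets_distinct[OF assms(1), of "lc (lab I y)" b "rc (lab I y)" a] a b label_valid[OF assms(1)] by auto
qed

lemma RCk_inj:
  assumes "y1 < n" "y2 < n" "RCk I k y1 = Some u" "RCk I k y2 = Some u" "lev y1 = Some L1" "lev y2 = Some L2"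
  shows "y1 = y2"
  using RCk_SomeD(2)[OF assms(1,3,5)] RCk_SomeD(2)[OF assms(2,4,6)] by auto

definition good :: "nat \<Rightarrow> nat \<Rightarrow> bool" where
  "good l = is_good (port I) (obs I) k l (level_out (port I) (obs I) k t l)"

definition down :: "nat \<Rightarrow> nat \<Rightarrow> nat option" where
  "down l = avoiding (good l) (lc_child (port I) (obs I) k)"

definition up :: "nat \<Rightarrow> nat \<Rightarrow> nat option" where
  "up l = avoiding (good l) (lc_parent (port I) (obs I) k)"

definition chain_out :: "nat \<Rightarrow> nat \<Rightarrow> color" where
  "chain_out l = chain_color t (obs I) (up l) (down l)"

definition bad :: "nat \<Rightarrow> nat \<Rightarrow> bool" where
  "bad l x \<longleftrightarrow> x < n \<and> lev x = Some (Suc l) \<and> \<not> good l x"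

lemma level_out_Suc: "level_out (port I) (obs I) k t (Suc l) x = (if good l x then X else chain_out l x)"
  by (simp add: Let_def good_def chain_out_def up_def down_def)

lemma down_iff: "a < n \<Longrightarrow> down l a = Some c \<longleftrightarrow> \<not> good l a \<and> \<not> good l c \<and> LCk I k a = Some c"
  by (auto simp: down_def avoiding_def lc_child_eq_LCk split: option.splits)

lemma up_iff: "c < n \<Longrightarrow> up l c = Some a \<longleftrightarrow> \<not> good l c \<and> \<not> good l a \<and> a < n \<and> LCk I k a = Some c"
proof -
  assume "c < n"
  have "up l c = Some a \<longleftrightarrow> \<not> good l c \<and> lc_parent (port I) (obs I) k c = Some a \<and> \<not> good l a"
    by (auto simp: up_def avoiding_def split: option.splits)
  then show ?thesis using lc_parent_iff[OF \<open>c < n\<close>] by blast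
qed

lemma down_iff_up: "a < n \<Longrightarrow> c < n \<Longrightarrow> down l a = Some c \<longleftrightarrow> up l c = Some a"
  using down_iff up_iff by blast

lemma down_SomeD: "a < n \<Longrightarrow> down l a = Some c \<Longrightarrow> c < n \<and> lev c = lev a \<and> \<not> good l c \<and> \<not> good l a \<and> up l c = Some a"
  using down_iff LCk_SomeD down_iff_up by metis

lemma up_SomeD: "c < n \<Longrightarrow> up l c = Some a \<Longrightarrow> a < n \<and> lev c = lev a \<and> \<not> good l c \<and> \<not> good l a \<and> down l a = Some c"
  using up_iff LCk_SomeD down_iff_up by metis

lemma bad_down: "bad l a \<Longrightarrow> down l a = Some c \<Longrightarrow> bad l c"
  unfolding bad_def using down_SomeD by metis

lemma bad_up: "bad l c \<Longrightarrow> up l c = Some a \<Longrightarrow> bad l a"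
  unfolding bad_def using up_SomeD by metis

lemma down_inj: "a < n \<Longrightarrow> b < n \<Longrightarrow> down l a = Some c \<Longrightarrow> down l b = Some c \<Longrightarrow> a = b"
  using down_SomeD by (metis option.inject)

lemma up_inj: "a < n \<Longrightarrow> b < n \<Longrightarrow> up l a = Some c \<Longrightarrow> up l b = Some c \<Longrightarrow> a = b"
  using up_SomeD by (metis option.inject)

lemma walk_up_reverse: "a < n \<Longrightarrow> walk (up l) i a = Some y \<Longrightarrow> walk (down l) i y = Some a \<and> y < n"
  by (rule walk_reverse[where P="\<lambda>a. a < n"]) (use up_SomeD in auto)

lemma walk_down_reverse: "a < n \<Longrightarrow> walk (down l) i a = Some y \<Longrightarrow> walk (up l) i y = Some a \<and> y < n"
  by (rule walk_reverse[where P="\<lambda>a. a < n"]) (use down_SomeD in auto)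

lemma on_short_cycle_iff: "a < n \<Longrightarrow> on_short_cycle t (obs I) (up l) a \<longleftrightarrow> (\<exists>m\<in>{1..t}. walk (up l) m a = Some a)"
  unfolding on_short_cycle_def using ident_inj walk_up_reverse by (metis obs_ident_obs)

lemma up_cycle_has_down: "a < n \<Longrightarrow> walk (up l) (Suc m) a = Some a \<Longrightarrow> down l a \<noteq> None"
  by (metis walk_SucE walk_up_reverse up_SomeD option.distinct(1))

lemma walk_end_up_SomeE:
  assumes "a < n" "walk_end (up l) f a = Some T"
  obtains i where "i \<le> f" "walk (down l) i T = Some a" "up l T = None" "T < n"
  using assms(2) by (rule walk_end_SomeE) (use walk_up_reverse[OF assms(1)] in blast)

lemma chain_out_RBD:
  assumes "a < n"
  shows "chain_out l a \<in> {R, B, D}"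
proof -
  have "cin (lab I b) \<in> {R, B}" if T: "walk_end (up l) t a = Some T" and b: "walk_end (down l) (t - 1) T = Some b" for T b
  proof -
    obtain i where "i \<le> t" "walk (down l) i T = Some a" "up l T = None" "T < n"
      using assms T by (rule walk_end_up_SomeE)
    moreover obtain j where "j \<le> t - 1" "walk (down l) j T = Some b" "down l b = None"
      using b by (rule walk_end_SomeE)
    ultimately show ?thesis using walk_down_reverse cin_RB by blast
  qed
  then show ?thesis unfolding chain_out_def chain_color_def by (auto split: option.splits)
qed

lemma chain_out_no_down:
  assumes "a < n" "down l a = None"
  shows "chain_out l a \<in> {cin (lab I a), D}"
proof -
  have "\<not> on_short_cycle t (obs I) (up l) a"
    using on_short_cycle_iff[OF assms(1)] up_cycle_has_down[OF assms(1)] assms(2) by (metis atLeastAtMost_iff not0_implies_Suc not_one_le_zero)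
  moreover have "b = a" if T: "walk_end (up l) t a = Some T" and b: "walk_end (down l) (t - 1) T = Some b" for T b
  proof -
    obtain i where "i \<le> t" "walk (down l) i T = Some a" "up l T = None" "T < n"
      using assms(1) T by (rule walk_end_up_SomeE)
    moreover obtain j where "j \<le> t - 1" "walk (down l) j T = Some b" "down l b = None"
      using b by (rule walk_end_SomeE)
    ultimately show "b = a" using walk_end_unique assms(2) by blast
  qed
  ultimately show ?thesis unfolding chain_out_def chain_color_def by (auto split: option.splits)
qed

lemma on_short_cycle_down_eq:
  assumes a: "a < n" and c: "c < n" and d: "down l a = Some c"
  shows "on_short_cycle t (obs I) (up l) a \<longleftrightarrow> on_short_cycle t (obs I) (up l) c"
proof -
  have uc: "up l c = Some a" using down_iff_up a c d by blast
  then have shift: "walk (up l) (Suc m) c = walk (up l) m a" for m by simp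
  have "walk (up l) m a = Some a \<longleftrightarrow> walk (up l) m c = Some c" if m1: "1 \<le> m" for m
  proof
    assume cyc: "walk (up l) m a = Some a"
    obtain m' where m: "m = Suc m'" using m1 by (cases m) auto
    obtain y where y: "walk (up l) m' a = Some y" "up l y = Some a" using cyc unfolding m by (rule walk_SucE)
    then have "y = c" using up_SomeD walk_up_reverse[OF a y(1)] d by auto
    then show "walk (up l) m c = Some c" using shift y m by simp
  next
    assume "walk (up l) m c = Some c"
    then have "walk (up l) (Suc m) c = Some a" unfolding walk_Suc_right using uc by simp
    then show "walk (up l) m a = Some a" using shift by simp
  qed
  then show ?thesis using on_short_cycle_iff a c by auto
qed

lemma chain_out_down_eq:
  assumes a: "a < n" and c: "c < n" and d: "down l a = Some c"
  shows "chain_out l a = chain_out l c"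
proof (cases "on_short_cycle t (obs I) (up l) a")
  case True then show ?thesis using on_short_cycle_down_eq[OF assms] by (simp add: chain_out_def chain_color_def)
next
  case False
  then have no_cycle: "\<not> on_short_cycle t (obs I) (up l) a" "\<not> on_short_cycle t (obs I) (up l) c"
    using on_short_cycle_down_eq[OF assms] by auto
  obtain t' where t': "t = Suc t'" using t_pos by (cases t) auto
  have uc: "up l c = Some a" using down_iff_up a c d by blast
  then have top_c: "walk_end (up l) t c = walk_end (up l) t' a" using t' by simp
  show ?thesis
  proof (cases "walk_end (up l) t' a")
    case (Some T)
    then have "walk_end (up l) t a = Some T" using walk_end_Suc t' by blast
    then show ?thesis using no_cycle top_c Some by (simp add: chain_out_def chain_color_def)
  next
    case None
    then have long: "walk (up l) t a \<noteq> None" using walk_end_None t' by blast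
    have Dc: "chain_out l c = D" using no_cycle top_c None by (simp add: chain_out_def chain_color_def)
    show ?thesis
    proof (cases "walk_end (up l) t a")
      case (Some T)
      then obtain i where i: "i \<le> t" "walk (up l) i a = Some T" "up l T = None" by (rule walk_end_SomeE)
      have "i = t" using walk_past_end[OF i(2,3), of t] long i(1) by (cases "i < t") auto
      then have "walk (down l) t T = Some a" using walk_up_reverse a i by blast
      then have below: "walk (down l) (Suc t) T = Some c" unfolding walk_Suc_right using d by simp
      have "walk_end (down l) (t - 1) T = None"
      proof (rule ccontr)
        assume "walk_end (down l) (t - 1) T \<noteq> None"
        then obtain b where "walk_end (down l) (t - 1) T = Some b" by blast
        then obtain j where j: "j \<le> t - 1" "walk (down l) j T = Some b" "down l b = None" by (rule walk_end_SomeE)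
        then show False using walk_past_end[OF j(2,3), of "Suc t"] below by simp
      qed
      then show ?thesis using no_cycle Dc Some by (simp add: chain_out_def chain_color_def)
    qed (use no_cycle Dc in \<open>simp add: chain_out_def chain_color_def\<close>)
  qed
qed

lemma walk_down_from_D_top:
  assumes u: "u < n" and top: "up l u = None" and D: "chain_out l u = D"
  shows "walk (down l) t u \<noteq> None"
proof -
  have "walk (up l) m u = None" if "1 \<le> m" for m using top that by (cases m) auto
  then have "\<not> on_short_cycle t (obs I) (up l) u" using on_short_cycle_iff[OF u] by auto
  moreover have "walk_end (up l) t u = Some u" using walk_end_self top by blast
  moreover have "walk_end (down l) (t - 1) u = None"
  proof (rule ccontr)
    assume "walk_end (down l) (t - 1) u \<noteq> None"
    then obtain b where b: "walk_end (down l) (t - 1) u = Some b" by blast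
    then obtain j where "j \<le> t - 1" "walk (down l) j u = Some b" "down l b = None" by (rule walk_end_SomeE)
    then have "cin (lab I b) \<noteq> D" using walk_down_reverse u cin_RB by fastforce
    then show False using D calculation b by (simp add: chain_out_def chain_color_def)
  qed
  then show ?thesis using walk_end_None[of "down l" "t - 1" u] t_pos by simp
qed

lemma tops_down_walk_inj:
  assumes "u1 < n" "u2 < n" "up l u1 = None" "up l u2 = None"
    and "walk (down l) j1 u1 = Some z" "walk (down l) j2 u2 = Some z"
  shows "j1 = j2 \<and> u1 = u2"
proof -
  have "walk (up l) j1 z = Some u1" "walk (up l) j2 z = Some u2" using walk_down_reverse assms by blast+
  then show ?thesis using walk_end_unique assms(3,4) by blast
qed

lemma bad_Suc_rc_child:
  assumes "bad (Suc l) y"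
  obtains u where "RCk I k y = Some u" "bad l u" "up l u = None" "walk (down l) t u \<noteq> None"
proof -
  have y: "y < n" "lev y = Some (Suc (Suc l))" "\<not> good (Suc l) y" using assms by (auto simp: bad_def)
  obtain u where u: "RCk I k y = Some u" "level_out (port I) (obs I) k t (Suc l) u = D"
    using y(3) rc_child_eq_RCk[OF y(1)] by (auto simp: good_def is_good_def simp del: level_out.simps split: option.splits)
  have un: "u < n" "lev u = Some (Suc l)" using RCk_SomeD[OF y(1) u(1) y(2)] by auto
  have bad: "\<not> good l u" "chain_out l u = D" using u(2) level_out_Suc[of l u] by (auto split: if_splits)
  have top: "up l u = None"
  proof (rule ccontr)
    assume "up l u \<noteq> None"
    then obtain a where "up l u = Some a" by blast
    then have "a < n" "LCk I k a = Some u" using up_iff un(1) by blast+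
    then show False using RCk_not_LCk[OF y(1) u(1) _ _ y(2)] by blast
  qed
  show thesis using that u(1) un bad top walk_down_from_D_top[OF un(1) top bad(2)] by (simp add: bad_def)
qed

lemma card_bad_mult_le: "S \<subseteq> Collect (bad l) \<Longrightarrow> card S * (t + 1) ^ l \<le> n"
proof (induction l arbitrary: S)
  case 0
  have "S \<subseteq> {..<n}" using 0 by (auto simp: bad_def)
  then show ?case using card_mono[of "{..<n}" S] by simp
next
  case (Suc l)
  define child where "child y = the (RCk I k y)" for y
  have child: "RCk I k y = Some (child y) \<and> bad l (child y) \<and> up l (child y) = None
      \<and> walk (down l) t (child y) \<noteq> None" if yS: "y \<in> S" for y
  proof -
    obtain u where "RCk I k y = Some u" "bad l u" "up l u = None" "walk (down l) t u \<noteq> None"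
      using Suc.prems yS by (auto intro: bad_Suc_rc_child[of l y])
    then show ?thesis by (simp add: child_def)
  qed
  define f where "f p = the (walk (down l) (snd p) (child (fst p)))" for p
  have walk_f: "walk (down l) j (child y) = Some (f (y, j))" if "y \<in> S" "j \<le> t" for y j
    using walk_defined_below[of "down l" t "child y" j] child[OF that(1)] that(2) by (auto simp: f_def)
  have "inj_on f (S \<times> {0..t})"
  proof (rule inj_onI)
    fix p q assume p: "p \<in> S \<times> {0..t}" and q: "q \<in> S \<times> {0..t}" and "f p = f q"
    then obtain y1 j1 y2 j2 where pq: "p = (y1, j1)" "q = (y2, j2)" "y1 \<in> S" "y2 \<in> S" "j1 \<le> t" "j2 \<le> t"
      by auto
    then have "walk (down l) j1 (child y1) = Some (f p)" "walk (down l) j2 (child y2) = Some (f p)"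
      using walk_f \<open>f p = f q\<close> by auto
    moreover have "child y1 < n" "child y2 < n" "up l (child y1) = None" "up l (child y2) = None"
      using child pq(3,4) by (auto simp: bad_def)
    ultimately have j: "j1 = j2" and same_child: "child y1 = child y2" using tops_down_walk_inj by blast+
    have "lev y1 = Some (Suc (Suc l))" "lev y2 = Some (Suc (Suc l))" "y1 < n" "y2 < n"
      using Suc.prems pq(3,4) by (auto simp: bad_def)
    then have "y1 = y2" using RCk_inj[of y1 y2 "child y1"] child[OF pq(3)] child[OF pq(4)] same_child by auto
    then show "p = q" using pq j by simp
  qed
  moreover have "f ` (S \<times> {0..t}) \<subseteq> Collect (bad l)"
  proof
    fix z assume "z \<in> f ` (S \<times> {0..t})"
    then obtain y j where y: "y \<in> S" "j \<le> t" "z = f (y, j)" by auto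
    have "bad l (child y)" using child[OF y(1)] by blast
    then show "z \<in> Collect (bad l)"
      using walk_closed[where P="bad l", OF bad_down _ walk_f[OF y(1,2)]] y(3) by simp
  qed
  ultimately have "card S * (t + 1) * (t + 1) ^ l \<le> n"
    using Suc.IH[of "f ` (S \<times> {0..t})"] by (simp add: card_image card_cartesian_product)
  moreover have "card S * (t + 1) ^ Suc l = card S * (t + 1) * (t + 1) ^ l" by (simp only: power_Suc ac_simps)
  ultimately show ?case by linarith
qed

lemma no_long_bad_walk_at_top:
  assumes "Suc l = k" and s: "s = up l \<or> s = down l" and "bad l x" and defined: "walk s t x \<noteq> None"
    and acyclic: "\<And>m. m \<in> {1..t} \<Longrightarrow> walk s m x \<noteq> Some x"
  shows False
proof -
  have inj: "a = b" if "bad l a" "bad l b" "s a = Some c" "s b = Some c" for a b c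
    using s that up_inj[of a b l c] down_inj[of a b l c] unfolding bad_def by blast
  have cl: "bad l c" if "bad l a" "s a = Some c" for a c
    using s that bad_up bad_down by blast
  let ?g = "\<lambda>i. the (walk s i x)"
  have "inj_on ?g {0..t}" by (rule inj_on_walk[where P="bad l", OF inj cl \<open>bad l x\<close> defined acyclic])
  then have card: "card (?g ` {0..t}) = t + 1" by (simp add: card_image)
  have "?g ` {0..t} \<subseteq> Collect (bad l)"
  proof
    fix z assume "z \<in> ?g ` {0..t}"
    then obtain i where "i \<le> t" "z = ?g i" by auto
    moreover have "walk s i x = Some (?g i)" using walk_defined_below[OF defined \<open>i \<le> t\<close>] by simp
    ultimately show "z \<in> Collect (bad l)" using walk_closed[where P="bad l", OF cl \<open>bad l x\<close>] by simp
  qed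
  then have "(t + 1) * (t + 1) ^ l \<le> n" using card_bad_mult_le card by metis
  then have "(t + 1) ^ k \<le> n" unfolding assms(1)[symmetric] power_Suc .
  then show False using n_lt by simp
qed

lemma chain_out_top_not_D:
  assumes "bad l a" "Suc l = k"
  shows "chain_out l a \<noteq> D"
proof
  assume D: "chain_out l a = D"
  have a: "a < n" using assms(1) by (simp add: bad_def)
  have no_cycle: "\<not> on_short_cycle t (obs I) (up l) a" using D by (auto simp: chain_out_def chain_color_def)
  show False
  proof (cases "walk_end (up l) t a")
    case None
    then have "walk (up l) t a \<noteq> None" using walk_defined_below[OF walk_end_None[OF None], of t] by simp
    moreover have "walk (up l) m a \<noteq> Some a" if "m \<in> {1..t}" for m
      using no_cycle on_short_cycle_iff[OF a] that by blast
    ultimately show False using no_long_bad_walk_at_top[of l "up l" a] assms by blast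
  next
    case (Some T)
    then obtain i where i: "i \<le> t" "walk (up l) i a = Some T" "up l T = None" by (rule walk_end_SomeE)
    have T: "bad l T" using walk_closed[where P="bad l", OF bad_up assms(1) i(2)] .
    have "walk_end (down l) (t - 1) T = None"
    proof (rule ccontr)
      assume "walk_end (down l) (t - 1) T \<noteq> None"
      then obtain b where b: "walk_end (down l) (t - 1) T = Some b" by blast
      then obtain j where j: "j \<le> t - 1" "walk (down l) j T = Some b" "down l b = None" by (rule walk_end_SomeE)
      have "bad l b" using walk_closed[where P="bad l", OF bad_down T j(2)] .
      then have "cin (lab I b) \<noteq> D" using cin_RB by (force simp: bad_def)
      then show False using D no_cycle b Some by (simp add: chain_out_def chain_color_def)
    qed
    then have "walk (down l) t T \<noteq> None" using walk_end_None[of "down l" "t - 1" T] t_pos by simp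
    moreover have "walk (down l) m T \<noteq> Some T" if m: "m \<in> {1..t}" for m
    proof
      assume cyc: "walk (down l) m T = Some T"
      obtain m' where "m = Suc m'" using m by (cases m) auto
      then obtain y where y: "walk (down l) m' T = Some y" "down l y = Some T"
        using cyc by (auto intro: walk_SucE[of "down l" m' T T])
      have "y < n" using walk_closed[where P="bad l", OF bad_down T y(1)] by (simp add: bad_def)
      then show False using down_SomeD[OF _ y(2)] i(3) by simp
    qed
    ultimately show False using no_long_bad_walk_at_top[of l "down l" T] assms(2) T by blast
  qed
qed

abbreviation "out \<equiv> local_out (port I) (obs I) k t"

lemma out_unleveled: "lev v = None \<Longrightarrow> out v = X"
  by (simp add: local_out_def)

lemma out_leveled: "lev v = Some (Suc l) \<Longrightarrow> out v = (if good l v then X else chain_out l v)"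
  by (simp add: local_out_def level_out_Suc del: level_out.simps)

lemma good_out:
  assumes v: "v < n" "lev v = Some (Suc l)" "good l v"
  shows "out v = X" "rc_out_in I k out v {R, B, X}" "1 \<le> l"
proof -
  show "out v = X" using out_leveled v by simp
  have g: "1 \<le> l \<and> (case RCk I k v of None \<Rightarrow> True | Some u \<Rightarrow> level_out (port I) (obs I) k t l u \<noteq> D)"
    using v(3) rc_child_eq_RCk[OF v(1)] by (simp add: good_def is_good_def)
  then show "1 \<le> l" by simp
  show "rc_out_in I k out v {R, B, X}" unfolding rc_out_in_def
  proof (intro allI impI)
    fix u assume u: "RCk I k v = Some u"
    then have "lev u = Some l" using RCk_SomeD(4)[OF v(1) u v(2)] by simp
    then have "out u = level_out (port I) (obs I) k t l u" by (simp add: local_out_def)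
    moreover have "level_out (port I) (obs I) k t l u \<noteq> D" using g u by simp
    ultimately show "out u \<in> {R, B, X}" by (cases "out u") auto
  qed
qed

lemma bad_out:
  assumes "bad l v"
  shows "out v \<in> {R, B, D}"
    and "LCk I k v = None \<Longrightarrow> out v \<in> {cin (lab I v), D}"
    and "LCk I k v = Some c \<Longrightarrow> out v = out c \<and> out c \<in> {R, B, D} \<or> out v \<in> {cin (lab I v), D} \<and> out c = X"
    and "LCk I k v = Some c \<Longrightarrow> l = 0 \<Longrightarrow> out v = out c"
    and "Suc l = k \<Longrightarrow> out v \<noteq> D"
proof -
  have v: "v < n" "lev v = Some (Suc l)" "\<not> good l v" using assms by (auto simp: bad_def)
  then have out_v: "out v = chain_out l v" using out_leveled by simp
  show RBD: "out v \<in> {R, B, D}" using out_v chain_out_RBD v(1) by simp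
  have no_down: "out v \<in> {cin (lab I v), D}" if "down l v = None" using out_v chain_out_no_down v(1) that by simp
  have along_down: "out v = out c" if "LCk I k v = Some c" "\<not> good l c" for c
  proof -
    have c: "c < n" "lev c = Some (Suc l)" using LCk_SomeD[OF v(1) that(1)] v(2) by auto
    have "down l v = Some c" using down_iff[OF v(1)] that v(3) by simp
    then show ?thesis using chain_out_down_eq[OF v(1) c(1)] out_v out_leveled[OF c(2)] that(2) by simp
  qed
  show "out v \<in> {cin (lab I v), D}" if "LCk I k v = None"
    using no_down down_iff[OF v(1)] that by (cases "down l v") auto
  show "out v = out c \<and> out c \<in> {R, B, D} \<or> out v \<in> {cin (lab I v), D} \<and> out c = X" if c: "LCk I k v = Some c"
  proof (cases "good l c")
    case True
    have "lev c = Some (Suc l)" using LCk_SomeD(2)[OF v(1) c] v(2) by simp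
    then have "out c = X" using out_leveled True by simp
    moreover have "down l v = None" using down_iff[OF v(1)] c True by (cases "down l v") auto
    ultimately show ?thesis using no_down by simp
  qed (use along_down[OF c] RBD in simp)
  show "out v = out c" if "LCk I k v = Some c" "l = 0" for c
    using along_down that by (simp add: good_def is_good_def)
  show "out v \<noteq> D" if "Suc l = k" using chain_out_top_not_D[OF assms that] out_v by simp
qed

lemma hthc_valid_out: "hthc_valid k n I out"
  unfolding hthc_valid_def Let_def is_leaf_def
proof (intro allI impI, goal_cases)
  case (1 v)
  show ?case
  proof (cases "lev v")
    case None
    then have "out v = X" using out_unleveled by simp
    moreover have "level I v = Some L \<Longrightarrow> k < L" for L using None lev_iff[of v L] by (cases "L \<le> k") auto
    ultimately show ?thesis using k_pos by auto
  next
    case (Some L)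
    then obtain l where lv: "lev v = Some (Suc l)" using lev_ge_1 by (cases L) auto
    have level: "level I v = Some (Suc l)" "Suc l \<le> k" using lev_iff lv by auto
    show ?thesis
    proof (cases "good l v")
      case True
      then show ?thesis using good_out[OF 1 lv True] level by auto
    next
      case False
      then have bad: "bad l v" using 1 lv by (simp add: bad_def)
      note facts = bad_out[OF bad]
      show ?thesis
        using level facts(1,2) facts(3)[of "the (LCk I k v)"] facts(4)[of "the (LCk I k v)"] facts(5)
        by auto
    qed
  qed
qed

end

section \<open>The gathering algorithm\<close>

text \<open>Position \<open>m \<ge> 1\<close> of the list of discovered nodes stands for the port path spelled by the
  base \<open>\<Delta> + 1\<close> digits of \<open>m\<close>: its last port is \<open>m mod (\<Delta> + 1)\<close>, the rest of the path is
  \<open>m div (\<Delta> + 1)\<close>.  Positions spelling no path are filled by querying port 1 of the start node,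
  so that positions and paths stay aligned.  The view of the gathered ball therefore has
  neighbour function \<open>\<lambda>x j. x * (\<Delta> + 1) + j\<close>.\<close>

function path_node :: "nat \<Rightarrow> inst \<Rightarrow> nat \<Rightarrow> nat \<Rightarrow> bool \<times> nat" where
  "path_node b I v m = (if m = 0 \<or> b < 2 then (m = 0, if m = 0 then v else port I v 1) else
     (if 1 \<le> m mod b \<and> fst (path_node b I v (m div b)) \<and> m mod b \<le> deg I (snd (path_node b I v (m div b)))
      then (True, port I (snd (path_node b I v (m div b))) (m mod b)) else (False, port I v 1)))"
  by pat_completeness auto
termination by (relation "measure (\<lambda>(b, I, v, m). m)") auto

function path_ok :: "nat \<Rightarrow> observation list \<Rightarrow> nat \<Rightarrow> bool" where
  "path_ok b L m = (if m = 0 \<or> b < 2 then m = 0 else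
     1 \<le> m mod b \<and> path_ok b L (m div b) \<and> m mod b \<le> fst (snd (L ! (m div b))))"
  by pat_completeness auto
termination by (relation "measure (\<lambda>(b, L, m). m)") auto

declare path_node.simps[simp del] path_ok.simps[simp del]

definition root_floor :: "nat \<Rightarrow> nat \<Rightarrow> nat" where
  "root_floor k n = nat \<lfloor>real n powr (1 / real k)\<rfloor>"

definition obs_at :: "observation list \<Rightarrow> nat \<Rightarrow> observation" where
  "obs_at L a = (if a < length L then L ! a else (0, 0, undefined))"

definition gather_alg :: "nat \<Rightarrow> algorithm" where
  "gather_alg \<Delta> k n L = (let b = \<Delta> + 1; m = length L in
     if m < b ^ radius k (root_floor k n) k \<and> 1 \<le> fst (snd (L ! 0)) then
       (if path_ok b L m then Query (m div b) (m mod b) else Query 0 1)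
     else Output (local_out (\<lambda>x j. x * b + j) (obs_at L) k (root_floor k n) 0))"

lemma mult_add_less_power:
  fixes a b j m :: nat
  assumes "a < b ^ m" "j < b"
  shows "a * b + j < b ^ Suc m"
proof -
  have "a * b + j < (a + 1) * b" using assms(2) by simp
  also have "\<dots> \<le> b ^ m * b" using assms(1) by (intro mult_le_mono1) simp
  finally show ?thesis by (simp add: mult.commute)
qed

locale gathering = labeled_graph +
  fixes v :: nat and k :: nat
  assumes v_lt: "v < n" and \<Delta>_pos: "1 \<le> \<Delta>" and k_pos: "1 \<le> k"
begin

abbreviation "b \<equiv> \<Delta> + 1"
abbreviation "valid_path m \<equiv> fst (path_node b I v m)"
abbreviation "node m \<equiv> snd (path_node b I v m)"
abbreviation "rad \<equiv> radius k (root_floor k n) k"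
abbreviation "views m \<equiv> map (obs I) (map node [0..<m])"

lemma obs_deg: "fst (snd (obs I w)) = deg I w"
  by (simp add: obs_def)

lemma base_ge_2: "2 \<le> b"
  using \<Delta>_pos by simp

lemma path_node_0: "path_node b I v 0 = (True, v)"
  by (simp add: path_node.simps)

lemma path_node_pos: "0 < m \<Longrightarrow> path_node b I v m =
    (if 1 \<le> m mod b \<and> valid_path (m div b) \<and> m mod b \<le> deg I (node (m div b))
     then (True, port I (node (m div b)) (m mod b)) else (False, port I v 1))"
  using base_ge_2 by (subst path_node.simps) simp

lemma valid_path_posD:
  assumes "valid_path m" "0 < m"
  shows "1 \<le> m mod b" "valid_path (m div b)" "m mod b \<le> deg I (node (m div b))"
    "node m = port I (node (m div b)) (m mod b)" "m div b < m"
  using assms path_node_pos[OF assms(2)] base_ge_2 by (auto split: if_splits)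

lemma node_lt: "valid_path a \<Longrightarrow> node a < n"
proof (induction a rule: less_induct)
  case (less a)
  show ?case
  proof (cases "a = 0")
    case True then show ?thesis using path_node_0 v_lt by simp
  next
    case False
    then show ?thesis using valid_path_posD[OF less.prems] less.IH port_lt by simp
  qed
qed

lemma valid_path_deg: "valid_path a \<Longrightarrow> 0 < a \<Longrightarrow> 1 \<le> deg I v"
proof (induction a rule: less_induct)
  case (less a)
  note parent = valid_path_posD[OF less.prems]
  show ?case
  proof (cases "a div b = 0")
    case True then show ?thesis using parent path_node_0 by simp
  next
    case False then show ?thesis using less.IH parent by blast
  qed
qed

lemma path_node_extend:
  assumes "valid_path a" "1 \<le> j" "j \<le> deg I (node a)"
  shows "path_node b I v (a * b + j) = (True, port I (node a) j)"
proof -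
  have "j < b" using assms(3) deg_le node_lt[OF assms(1)] by fastforce
  then have "(j + a * b) mod b = j" "(j + a * b) div b = a"
    using mod_mult_self1[of j a b] div_mult_self1[of b j a] by simp_all
  then have "(a * b + j) mod b = j" "(a * b + j) div b = a" by (simp_all add: add.commute)
  then show ?thesis using path_node_pos[of "a * b + j"] assms by simp
qed

lemma path_ok_views: "0 < M \<Longrightarrow> m \<le> M \<Longrightarrow> path_ok b (views M) m = valid_path m"
proof (induction m rule: less_induct)
  case (less m)
  show ?case
  proof (cases "m = 0")
    case True then show ?thesis using path_node_0 by (simp add: path_ok.simps)
  next
    case False
    then have m: "0 < m" by simp
    have d: "m div b < m" using m base_ge_2 by simp
    have nth: "views M ! (m div b) = obs I (node (m div b))" using d less.prems by simp
    have "path_ok b (views M) m =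
        (1 \<le> m mod b \<and> path_ok b (views M) (m div b) \<and> m mod b \<le> fst (snd (views M ! (m div b))))"
      using m base_ge_2 by (subst path_ok.simps) simp
    also have "\<dots> = (1 \<le> m mod b \<and> valid_path (m div b) \<and> m mod b \<le> deg I (node (m div b)))"
      using less.IH[OF d] less.prems d nth by (simp add: obs_deg)
    also have "\<dots> = valid_path m" using path_node_pos[OF m] by simp
    finally show ?thesis .
  qed
qed

definition gathered_out :: color where
  "gathered_out = local_out (\<lambda>x j. x * b + j) (obs_at (views (b ^ rad))) k (root_floor k n) 0"

lemma exec_gathering:
  assumes "1 \<le> deg I v"
  shows "b ^ rad - m = d \<Longrightarrow> 1 \<le> m \<Longrightarrow> m \<le> b ^ rad \<Longrightarrow>
    exec (gather_alg \<Delta> k n) I (map node [0..<m]) (Suc d) = Some (gathered_out, map node [0..<b ^ rad])"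
proof (induction d arbitrary: m)
  case 0
  then show ?case by (simp add: gather_alg_def gathered_out_def Let_def)
next
  case (Suc d)
  have m: "0 < m" "m < b ^ rad" using Suc.prems by auto
  have start: "1 \<le> fst (snd (views m ! 0))" using m(1) path_node_0 assms by (simp add: nth_map obs_def)
  have valid: "path_ok b (views m) m = valid_path m" using path_ok_views m by simp
  have next_node: "exec (gather_alg \<Delta> k n) I (map node [0..<m]) (Suc (Suc d))
      = exec (gather_alg \<Delta> k n) I (map node [0..<m] @ [node m]) (Suc d)"
  proof (cases "valid_path m")
    case True
    then show ?thesis using m start valid valid_path_posD[OF True m(1)] by (simp add: gather_alg_def Let_def)
  next
    case False
    then have "node m = port I v 1" using path_node_pos[OF m(1)] by (auto split: if_splits)
    then show ?thesis using m start valid False assms path_node_0 by (simp add: gather_alg_def Let_def)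
  qed
  have "map node [0..<Suc m] = map node [0..<m] @ [node m]" by simp
  then show ?case using next_node Suc.IH[of "Suc m"] Suc.prems by simp
qed

lemma gathered_out_eq:
  assumes gathered: "\<And>a. valid_path a \<Longrightarrow> a < b ^ rad \<Longrightarrow> obs_at L a = obs I (node a)"
  shows "local_out (\<lambda>x j. x * b + j) (obs_at L) k (root_floor k n) 0 = local_out (port I) (obs I) k (root_floor k n) v"
proof -
  define agree where "agree r a \<longleftrightarrow> valid_path a \<and> a < b ^ (rad - r) \<and> r \<le> rad" for r a
  have pow_mono: "\<And>x y. x \<le> y \<Longrightarrow> b ^ x \<le> b ^ y" by (rule power_increasing) simp_all
  interpret view_sim "\<lambda>x j. x * b + j" "obs_at L" "port I" "obs I" node agree
  proof
    fix r a assume "agree r a"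
    then show "obs_at L a = obs I (node a)"
      using gathered pow_mono[of "rad - r" rad] unfolding agree_def by fastforce
  next
    fix r a r' assume "agree r a" "r' \<le> r"
    then show "agree r' a" using pow_mono[of "rad - r" "rad - r'"] unfolding agree_def by fastforce
  next
    fix r a j p assume a: "agree (Suc r) a" and p: "p \<in> {par, lc, rc}" "p (obs_label (obs_at L) a) = Some j"
    have a': "valid_path a" "a < b ^ (rad - Suc r)" "Suc r \<le> rad" using a unfolding agree_def by auto
    then have "obs_at L a = obs I (node a)" using gathered pow_mono[of "rad - Suc r" rad] by fastforce
    then have "p (lab I (node a)) = Some j" using p(2) by (simp add: obs_label_def obs_def)
    then have j: "1 \<le> j" "j \<le> deg I (node a)" using pointer_le_deg node_lt[OF a'(1)] p(1) by blast+
    then have "j < b" using deg_le node_lt[OF a'(1)] by fastforce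
    with a'(2) have "a * b + j < b ^ Suc (rad - Suc r)" by (rule mult_add_less_power)
    then have "a * b + j < b ^ (rad - r)" using a'(3) by (simp add: Suc_diff_Suc)
    then show "agree r (a * b + j) \<and> node (a * b + j) = port I (node a) j"
      using path_node_extend[OF a'(1) j] a' unfolding agree_def by simp
  qed
  have "agree rad 0" unfolding agree_def using path_node_0 by simp
  moreover have "k \<le> rad" using radius_ge[OF k_pos, of k "root_floor k n"] by simp
  ultimately show ?thesis using local_out_sim path_node_0 by simp
qed

lemma valid_path_reachable: "valid_path a \<Longrightarrow> a < b ^ d \<Longrightarrow> \<exists>d'\<le>d. (adj I ^^ d') v (node a)"
proof (induction a arbitrary: d rule: less_induct)
  case (less a)
  show ?case
  proof (cases "a = 0")
    case True then show ?thesis using path_node_0 by (intro exI[of _ 0]) auto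
  next
    case False
    note parent = valid_path_posD[OF less.prems(1)] 
    obtain d1 where d1: "d = Suc d1" using less.prems False by (cases d) auto
    have "a div b < b ^ d1" using less.prems(2) d1 base_ge_2 by (simp add: div_less_iff_less_mult mult.commute)
    then obtain d' where d': "d' \<le> d1" "(adj I ^^ d') v (node (a div b))" using less.IH parent False by blast
    have "adj I (node (a div b)) (node a)" unfolding adj_def using parent False by (intro exI[of _ "a mod b"]) simp
    then have "(adj I ^^ Suc d') v (node a)" by (rule relpowp_Suc_I[OF d'(2)])
    then show ?thesis using d' d1 by (intro exI[of _ "Suc d'"]) auto
  qed
qed

lemma dist_node_le:
  assumes "a < b ^ rad" "1 \<le> deg I v" "1 \<le> rad"
  shows "dist I v (node a) \<le> rad"
proof (cases "valid_path a")
  case True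
  then obtain d' where "d' \<le> rad" "(adj I ^^ d') v (node a)" using valid_path_reachable assms by blast
  then show ?thesis unfolding dist_def by (meson Least_le le_trans)
next
  case False
  then have "0 < a" using path_node_0 by (cases "a = 0") auto
  then have "node a = port I v 1" using False path_node_pos[of a] by (auto split: if_splits)
  then have "adj I v (node a)" unfolding adj_def using assms by (intro exI[of _ 1]) simp
  then have "(adj I ^^ 1) v (node a)" by (simp only: relpowp_1)
  then show ?thesis unfolding dist_def using assms(3) by (meson Least_le le_trans)
qed

lemma gather_alg_correct:
  "\<exists>f vs. exec (gather_alg \<Delta> k n) I [v] f = Some (local_out (port I) (obs I) k (root_floor k n) v, vs)
      \<and> (\<forall>w\<in>set vs. dist I v w \<le> rad)"
proof (cases "1 \<le> deg I v")
  case True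
  have "1 \<le> rad" using radius_ge[OF k_pos, of k "root_floor k n"] by simp
  then have "\<forall>w\<in>set (map node [0..<b ^ rad]). dist I v w \<le> rad" using dist_node_le True by auto
  moreover have "gathered_out = local_out (port I) (obs I) k (root_floor k n) v"
    unfolding gathered_out_def by (rule gathered_out_eq) (simp add: obs_at_def)
  moreover have "map node [0..<1] = [v]" using path_node_0 by simp
  then have "exec (gather_alg \<Delta> k n) I [v] (Suc (b ^ rad - 1)) = Some (gathered_out, map node [0..<b ^ rad])"
    using exec_gathering[OF True, of 1 "b ^ rad - 1"] by simp
  ultimately show ?thesis by fastforce
next
  case False
  then have "deg I v = 0" by simp
  moreover have "obs_at [obs I v] a = obs I (node a)" if "valid_path a" for a
    using valid_path_deg that \<open>deg I v = 0\<close> path_node_0 by (cases "a = 0") (auto simp: obs_at_def)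
  then have "local_out (\<lambda>x j. x * b + j) (obs_at [obs I v]) k (root_floor k n) 0
      = local_out (port I) (obs I) k (root_floor k n) v" by (rule gathered_out_eq)
  ultimately have "exec (gather_alg \<Delta> k n) I [v] (Suc 0) = Some (local_out (port I) (obs I) k (root_floor k n) v, [v])"
    by (simp add: gather_alg_def Let_def obs_def)
  moreover have "dist I v v = 0" unfolding dist_def by (rule Least_eq_0) simp
  ultimately show ?thesis by fastforce
qed

end

section \<open>Parameters and cost\<close>

lemma root_floor_facts:
  assumes k: "1 \<le> k" and n: "1 \<le> n"
  shows "1 \<le> root_floor k n" "n < (root_floor k n + 1) ^ k" "real (root_floor k n) \<le> real n powr (1 / real k)"
    "1 \<le> real n powr (1 / real k)"
proof -
  define s where "s = real n powr (1 / real k)"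
  have s1: "1 \<le> s" unfolding s_def using n by (intro ge_one_powr_ge_zero) auto
  have floor: "real (root_floor k n) = of_int \<lfloor>s\<rfloor>" unfolding root_floor_def s_def[symmetric] using s1 by simp
  show "1 \<le> root_floor k n" "real (root_floor k n) \<le> real n powr (1 / real k)" "1 \<le> real n powr (1 / real k)"
    using s1 floor s_def by linarith+
  have "s ^ k = s powr real k" using s1 by (simp add: powr_realpow)
  also have "\<dots> = real n powr (1 / real k * real k)" unfolding s_def by (simp add: powr_powr)
  also have "\<dots> = real n" using k n by simp
  finally have "real n < real (root_floor k n + 1) ^ k"
    using power_strict_mono[of s "real (root_floor k n + 1)" k] floor s1 k by linarith
  then show "n < (root_floor k n + 1) ^ k" by (metis of_nat_less_iff of_nat_power)
qed

lemma radius_root_floor_le: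
  assumes "1 \<le> k" "1 \<le> n"
  shows "real (radius k (root_floor k n) k) \<le> 7 * real k * real n powr (1 / real k)"
proof -
  let ?s = "real n powr (1 / real k)"
  have "real (radius k (root_floor k n) k) \<le> real (k * (2 * root_floor k n + 3) + k + 1)"
    using radius_le by (simp only: of_nat_le_iff)
  also have "\<dots> = real k * (2 * real (root_floor k n) + 3) + real k + 1" by simp
  also have "\<dots> \<le> real k * (2 * ?s + 3) + real k + 1"
    using root_floor_facts[OF assms] assms(1) by (simp add: mult_left_mono)
  also have "\<dots> \<le> 7 * real k * ?s"
  proof -
    have "real k \<le> real k * ?s" using root_floor_facts(4)[OF assms] mult_left_mono[of 1 ?s "real k"] by simp
    moreover have "real k * (2 * ?s + 3) + real k + 1 = 2 * (real k * ?s) + 4 * real k + 1"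
      by (simp add: algebra_simps)
    moreover have "7 * real k * ?s = 7 * (real k * ?s)" by simp
    moreover have "1 \<le> real k" using assms(1) by simp
    ultimately show ?thesis by linarith
  qed
  finally show ?thesis .
qed

theorem mainTheorem6:
  fixes \<Delta> :: nat and \<alpha> :: real
  assumes "\<Delta> \<ge> 3" and "\<alpha> \<ge> 1"
  shows "\<exists>(A :: algorithm) (C :: real).
           \<forall>k n I. k \<ge> 1 \<longrightarrow> valid_graph \<Delta> \<alpha> n I \<longrightarrow> colored_tree_labeling \<Delta> n I \<longrightarrow>
             (\<exists>out. hthc_valid k n I out \<and>
                (\<forall>v<n. \<exists>f vs. exec (A k n) I [v] f = Some (out v, vs) \<and>
                   (\<forall>w\<in>set vs. real (dist I v w) \<le> C * real k * real n powr (1 / real k))))"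
proof (intro exI[of _ "gather_alg \<Delta>"] exI[of _ 7] allI impI)
  fix k n :: nat and I :: inst assume k: "1 \<le> k" and graph: "valid_graph \<Delta> \<alpha> n I" and labeling: "colored_tree_labeling \<Delta> n I"
  interpret labeled_graph \<Delta> \<alpha> n I using graph labeling by unfold_locales
  show "\<exists>out. hthc_valid k n I out \<and>
      (\<forall>v<n. \<exists>f vs. exec (gather_alg \<Delta> k n) I [v] f = Some (out v, vs) \<and>
         (\<forall>w\<in>set vs. real (dist I v w) \<le> 7 * real k * real n powr (1 / real k)))"
  proof (cases "n = 0")
    case True
    then show ?thesis by (intro exI[of _ "\<lambda>_. X"]) (simp add: hthc_valid_def)
  next
    case False
    then have n: "1 \<le> n" by simp
    interpret hthc_instance \<Delta> \<alpha> n I k "root_floor k n"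
      using k root_floor_facts[OF k n] by unfold_locales auto
    have "\<exists>f vs. exec (gather_alg \<Delta> k n) I [v] f = Some (out v, vs) \<and>
        (\<forall>w\<in>set vs. real (dist I v w) \<le> 7 * real k * real n powr (1 / real k))" if "v < n" for v
    proof -
      interpret gathering \<Delta> \<alpha> n I v k using that assms(1) k by unfold_locales auto
      show ?thesis using gather_alg_correct radius_root_floor_le[OF k n] by (meson of_nat_le_iff order_trans)
    qed
    then show ?thesis using hthc_valid_out by blast
  qed
qed

end
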